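(* Let $E$ be a locally complete lcHs, $G\subset E'$ a linear subspace that determines boundedness, $\Omega\subset\mathbb{R}^d$ open, $k\in\mathbb{N}_0$ and $0<\gamma\le1$. (a) If $f\colon\Omega\to E$ is such that $e'\circ f\in\mathcal{C}^{k,\gamma}_{loc}(\Omega)$ for all $e'\in G$, then $f\in\mathcal{C}^{k,\gamma}_{loc}(\Omega,E)$. (b) If $f\colon\Omega\to E$ is such that $e'\circ f\in\mathcal{C}^{k+1}(\Omega)$ for all $e'\in G$, then $f\in\mathcal{C}^{k,1}_{loc}(\Omega,E)$.
   Context: $\mathbb{K}\in\{\mathbb{R},\mathbb{C}\}$; "lcHs" means locally convex Hausdorff space over $\mathbb{K}$ with directed fundamental system of seminorms $(p_\alpha)_{\alpha\in\mathfrak{A}}$. $E$ is locally complete if for every closed bounded absolutely convex $D\subset E$ the space $\bigcup_n nD$ normed by the gauge of $D$ is Banach. $G\subset E'$ determines boundedness if every $\sigma(E,G)$-bounded subset of $E$ is bounded in $E$. $\mathcal{C}^k(\Omega,E)$ denotes $k$-times continuously partially differentiable functions (partial derivatives $(\partial^\beta)^E$ as limits of difference quotients in $E$). $\mathcal{C}^{k,\gamma}_{loc}(\Omega,E)$ is the space of $f\in\mathcal{C}^k(\Omega,E)$ such that for every compact $K\subset\Omega$ and $\alpha\in\mathfrak{A}$: $\sup_{x\in K,|\beta|\le k}p_\alpha((\partial^\beta)^Ef(x))<\infty$ and $\sup_{|\beta|=k}\sup_{x\ne y\in K}\frac{p_\alpha((\partial^\beta)^Ef(x)-(\partial^\beta)^Ef(y))}{|x-y|^\gamma}<\infty$.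 For $E=\mathbb{K}$ the $E$ is omitted. *)

theory Defs
  imports "HOL-Analysis.Analysis"
begin

text \<open>
  Locally convex Hausdorff spaces over a scalar field 'k (a real normed field, i.e. R or C up
  to isomorphism), given by a vector space structure smul on 'e and a family of seminorms
  P :: 'a => 'e => real indexed by 'a (the fundamental system).
\<close>

definition seminorm :: "('k::real_normed_field \<Rightarrow> 'e::ab_group_add \<Rightarrow> 'e) \<Rightarrow> ('e \<Rightarrow> real) \<Rightarrow> bool" where
  "seminorm smul p \<longleftrightarrow> (\<forall>x y. p (x + y) \<le> p x + p y) \<and> (\<forall>c x. p (smul c x) = norm c * p x)"

definition lcHs :: "('k::real_normed_field \<Rightarrow> 'e::ab_group_add \<Rightarrow> 'e) \<Rightarrow> ('a \<Rightarrow> 'e \<Rightarrow> real) \<Rightarrow> bool" where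
  "lcHs smul P \<longleftrightarrow> vector_space smul \<and> (\<forall>a. seminorm smul (P a))
     \<and> (\<forall>a b. \<exists>c C. \<forall>x. max (P a x) (P b x) \<le> C * P c x)
     \<and> (\<forall>x. (\<forall>a. P a x = 0) \<longrightarrow> x = 0)"

definition lc_bounded :: "('a \<Rightarrow> 'e \<Rightarrow> real) \<Rightarrow> 'e set \<Rightarrow> bool" where
  "lc_bounded P B \<longleftrightarrow> (\<forall>a. \<exists>C. \<forall>x\<in>B. P a x \<le> C)"

definition lc_closed :: "('a \<Rightarrow> 'e::ab_group_add \<Rightarrow> real) \<Rightarrow> 'e set \<Rightarrow> bool" where
  "lc_closed P D \<longleftrightarrow> (\<forall>x. (\<forall>a. \<forall>\<epsilon>>0. \<exists>y\<in>D. P a (x - y) < \<epsilon>) \<longrightarrow> x \<in> D)"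

definition abs_convex :: "('k::real_normed_field \<Rightarrow> 'e::ab_group_add \<Rightarrow> 'e) \<Rightarrow> 'e set \<Rightarrow> bool" where
  "abs_convex smul D \<longleftrightarrow>
     (\<forall>x\<in>D. \<forall>y\<in>D. \<forall>c d. norm c + norm d \<le> 1 \<longrightarrow> smul c x + smul d y \<in> D)"

text \<open>The normed space E_D = union of n D, with the gauge (Minkowski functional) of D.\<close>

definition span_set :: "('k::real_normed_field \<Rightarrow> 'e::ab_group_add \<Rightarrow> 'e) \<Rightarrow> 'e set \<Rightarrow> 'e set" where
  "span_set smul D = {x. \<exists>n::nat. \<exists>y\<in>D. x = smul (of_nat n) y}"

definition gauge_fun :: "('k::real_normed_field \<Rightarrow> 'e::ab_group_add \<Rightarrow> 'e) \<Rightarrow> 'e set \<Rightarrow> 'e \<Rightarrow> real" where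
  "gauge_fun smul D x = Inf {t::real. t > 0 \<and> (\<exists>y\<in>D. x = smul (of_real t) y)}"

definition locally_complete :: "('k::real_normed_field \<Rightarrow> 'e::ab_group_add \<Rightarrow> 'e) \<Rightarrow> ('a \<Rightarrow> 'e \<Rightarrow> real) \<Rightarrow> bool" where
  "locally_complete smul P \<longleftrightarrow>
     (\<forall>D. lc_closed P D \<and> lc_bounded P D \<and> abs_convex smul D \<and> D \<noteq> {} \<longrightarrow>
        (\<forall>s. (\<forall>n. s n \<in> span_set smul D) \<longrightarrow>
             (\<forall>\<epsilon>>0. \<exists>N. \<forall>m\<ge>N. \<forall>n\<ge>N. gauge_fun smul D (s m - s n) < \<epsilon>) \<longrightarrow>
             (\<exists>x\<in>span_set smul D. (\<lambda>n. gauge_fun smul D (s n - x)) \<longlonglongrightarrow> 0)))"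

definition lc_dual :: "('k::real_normed_field \<Rightarrow> 'e::ab_group_add \<Rightarrow> 'e) \<Rightarrow> ('a \<Rightarrow> 'e \<Rightarrow> real) \<Rightarrow> ('e \<Rightarrow> 'k) set" where
  "lc_dual smul P = {l. (\<forall>x y. l (x + y) = l x + l y) \<and> (\<forall>c x. l (smul c x) = c * l x)
                       \<and> (\<exists>a C. \<forall>x. norm (l x) \<le> C * P a x)}"

definition linear_subspace_fun :: "('e \<Rightarrow> 'k::real_normed_field) set \<Rightarrow> bool" where
  "linear_subspace_fun G \<longleftrightarrow> (\<lambda>_. 0) \<in> G \<and> (\<forall>l\<in>G. \<forall>m\<in>G. (\<lambda>x. l x + m x) \<in> G)
      \<and> (\<forall>l\<in>G. \<forall>c. (\<lambda>x. c * l x) \<in> G)"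

definition determines_boundedness :: "('a \<Rightarrow> 'e \<Rightarrow> real) \<Rightarrow> ('e \<Rightarrow> 'k::real_normed_field) set \<Rightarrow> bool" where
  "determines_boundedness P G \<longleftrightarrow>
     (\<forall>B. (\<forall>l\<in>G. \<exists>C. \<forall>x\<in>B. norm (l x) \<le> C) \<longrightarrow> lc_bounded P B)"

definition mi_order :: "('n::finite \<Rightarrow> nat) \<Rightarrow> nat" where
  "mi_order \<beta> = (\<Sum>i\<in>UNIV. \<beta> i)"

definition has_partial :: "('k::real_normed_field \<Rightarrow> 'e::ab_group_add \<Rightarrow> 'e) \<Rightarrow> ('a \<Rightarrow> 'e \<Rightarrow> real)
    \<Rightarrow> (real^'n \<Rightarrow> 'e) \<Rightarrow> 'n \<Rightarrow> real^'n \<Rightarrow> 'e \<Rightarrow> bool" where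
  "has_partial smul P f i x v \<longleftrightarrow>
     (\<forall>a. ((\<lambda>h. P a (smul (of_real (1 / h)) (f (x + h *\<^sub>R axis i 1) - f x) - v)) \<longlongrightarrow> 0) (at 0))"

definition lc_continuous_on :: "('a \<Rightarrow> 'e::ab_group_add \<Rightarrow> real) \<Rightarrow> (real^'n) set \<Rightarrow> (real^'n \<Rightarrow> 'e) \<Rightarrow> bool" where
  "lc_continuous_on P \<Omega> f \<longleftrightarrow>
     (\<forall>x\<in>\<Omega>. \<forall>a. ((\<lambda>y. P a (f y - f x)) \<longlongrightarrow> 0) (at x within \<Omega>))"

definition deriv_system :: "('k::real_normed_field \<Rightarrow> 'e::ab_group_add \<Rightarrow> 'e) \<Rightarrow> ('a \<Rightarrow> 'e \<Rightarrow> real)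
    \<Rightarrow> (real^'n::finite) set \<Rightarrow> nat \<Rightarrow> (real^'n \<Rightarrow> 'e) \<Rightarrow> (('n \<Rightarrow> nat) \<Rightarrow> real^'n \<Rightarrow> 'e) \<Rightarrow> bool" where
  "deriv_system smul P \<Omega> k f D \<longleftrightarrow>
     (\<forall>x\<in>\<Omega>. D (\<lambda>_. 0) x = f x)
     \<and> (\<forall>\<beta> i. mi_order \<beta> < k \<longrightarrow> (\<forall>x\<in>\<Omega>. has_partial smul P (D \<beta>) i x (D (\<beta>(i := Suc (\<beta> i))) x)))
     \<and> (\<forall>\<beta>. mi_order \<beta> \<le> k \<longrightarrow> lc_continuous_on P \<Omega> (D \<beta>))"

definition Ck :: "('k::real_normed_field \<Rightarrow> 'e::ab_group_add \<Rightarrow> 'e) \<Rightarrow> ('a \<Rightarrow> 'e \<Rightarrow> real)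
    \<Rightarrow> (real^'n::finite) set \<Rightarrow> nat \<Rightarrow> (real^'n \<Rightarrow> 'e) \<Rightarrow> bool" where
  "Ck smul P \<Omega> k f \<longleftrightarrow> (\<exists>D. deriv_system smul P \<Omega> k f D)"

definition Ck_gamma_loc :: "('k::real_normed_field \<Rightarrow> 'e::ab_group_add \<Rightarrow> 'e) \<Rightarrow> ('a \<Rightarrow> 'e \<Rightarrow> real)
    \<Rightarrow> (real^'n::finite) set \<Rightarrow> nat \<Rightarrow> real \<Rightarrow> (real^'n \<Rightarrow> 'e) \<Rightarrow> bool" where
  "Ck_gamma_loc smul P \<Omega> k \<gamma> f \<longleftrightarrow> (\<exists>D. deriv_system smul P \<Omega> k f D \<and>
     (\<forall>K. compact K \<and> K \<subseteq> \<Omega> \<longrightarrow> (\<forall>a.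
        (\<exists>C. \<forall>x\<in>K. \<forall>\<beta>. mi_order \<beta> \<le> k \<longrightarrow> P a (D \<beta> x) \<le> C)
      \<and> (\<exists>C. \<forall>\<beta>. mi_order \<beta> = k \<longrightarrow> (\<forall>x\<in>K. \<forall>y\<in>K. x \<noteq> y \<longrightarrow>
            P a (D \<beta> x - D \<beta> y) \<le> C * norm (x - y) powr \<gamma>)))))"

abbreviation Ck_scalar :: "(real^'n::finite) set \<Rightarrow> nat \<Rightarrow> (real^'n \<Rightarrow> 'k::real_normed_field) \<Rightarrow> bool" where
  "Ck_scalar \<Omega> k g \<equiv> Ck (*) (\<lambda>_::unit. norm) \<Omega> k g"

abbreviation Ck_gamma_loc_scalar :: "(real^'n::finite) set \<Rightarrow> nat \<Rightarrow> real \<Rightarrow> (real^'n \<Rightarrow> 'k::real_normed_field) \<Rightarrow> bool" where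
  "Ck_gamma_loc_scalar \<Omega> k \<gamma> g \<equiv> Ck_gamma_loc (*) (\<lambda>_::unit. norm) \<Omega> k \<gamma> g"

end

theory Submission
  imports Defs
begin

text \<open>
  For every e' in G and every multi-index beta of order at most k, the scalar derivative
  of e' o f at x is the value of e' at a vector of E. This is proved by induction on the order:
  if a function E_beta represents the derivatives of order beta, its difference quotients along a
  coordinate axis converge weakly to the next derivative at the rate |h| powr gamma, by the mean
  value estimate and the local Hoelder continuity of that derivative. A weak rate puts the
  quotients into the normed space spanned by the absolutely convex set
  {v. |e'(v)| <= c(e') for all e' in G}, where they form a Cauchy family; this set is closed, and
  bounded because G determines boundedness, so local completeness provides the limit in E.
  Boundedness being determined by G, every weak estimate transfers to the seminorms, which yields
  the continuity and the Hoelder bounds of the vector-valued derivatives. Part (b) is the same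
  argument with gamma = 1, since derivatives of order at most k of a C^(k+1) function are
  locally Lipschitz.
\<close>

section \<open>Scalar functions of several real variables\<close>

lemma lc_continuous_on_norm_iff:
  "lc_continuous_on (\<lambda>_::unit. norm) \<Omega> (g :: real^'n::finite \<Rightarrow> 'k::real_normed_field)
     \<longleftrightarrow> continuous_on \<Omega> g"
  unfolding lc_continuous_on_def continuous_on_def
  by (simp add: tendsto_norm_zero_iff LIM_zero_iff)

lemma norm_scaled_difference_quotient:
  fixes w v :: "'k::real_normed_field"
  assumes "h \<noteq> 0"
  shows "norm (w - h *\<^sub>R v) / norm h = norm (of_real (1/h) * w - v)"
proof -
  have "norm (w - h *\<^sub>R v) / norm h = norm ((1/h) *\<^sub>R (w - h *\<^sub>R v))"
    by (simp add: divide_inverse mult.commute)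
  also have "(1/h) *\<^sub>R (w - h *\<^sub>R v) = of_real (1/h) * w - v"
    using assms by (simp add: scaleR_diff_right scaleR_conv_of_real field_simps)
  finally show ?thesis .
qed

lemma has_partial_norm_imp_has_vector_derivative:
  fixes g :: "real^'n::finite \<Rightarrow> 'k::real_normed_field"
  assumes "has_partial (*) (\<lambda>_::unit. norm) g i (x + t *\<^sub>R axis i 1) v"
  shows "((\<lambda>s. g (x + s *\<^sub>R axis i 1)) has_vector_derivative v) (at t)"
proof -
  let ?y = "x + t *\<^sub>R axis i 1"
  have quotient: "norm (g (x + (t + h) *\<^sub>R axis i 1) - g ?y - h *\<^sub>R v) / norm h
      = norm (of_real (1/h) * (g (?y + h *\<^sub>R axis i 1) - g ?y) - v)" if "h \<noteq> 0" for h :: real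
  proof -
    have "x + (t + h) *\<^sub>R axis i 1 = ?y + h *\<^sub>R axis i 1"
      by (simp add: scaleR_add_left algebra_simps)
    moreover note norm_scaled_difference_quotient[OF that]
    ultimately show ?thesis by (simp add: add.assoc)
  qed
  have "((\<lambda>h. norm (of_real (1/h) * (g (?y + h *\<^sub>R axis i 1) - g ?y) - v)) \<longlongrightarrow> 0) (at 0)"
    using assms unfolding has_partial_def by simp
  then have "((\<lambda>h. norm (g (x + (t + h) *\<^sub>R axis i 1) - g ?y - h *\<^sub>R v) / norm h) \<longlongrightarrow> 0) (at 0)"
  proof (rule Lim_transform_eventually)
    show "\<forall>\<^sub>F h in at 0. norm (of_real (1/h) * (g (?y + h *\<^sub>R axis i 1) - g ?y) - v)
        = norm (g (x + (t + h) *\<^sub>R axis i 1) - g ?y - h *\<^sub>R v) / norm h"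
      unfolding eventually_at_filter by (intro always_eventually allI impI) (rule quotient[symmetric])
  qed
  then show ?thesis
    unfolding has_vector_derivative_def has_derivative_at by (simp add: bounded_linear_scaleR_left)
qed

lemma has_vector_derivative_on_coordinate_segment:
  fixes g gd :: "real^'n::finite \<Rightarrow> 'k::real_normed_field"
  assumes "\<And>t. \<bar>t\<bar> \<le> \<bar>c\<bar> \<Longrightarrow>
      has_partial (*) (\<lambda>_::unit. norm) g i (x + t *\<^sub>R axis i 1) (gd (x + t *\<^sub>R axis i 1))"
    and "t \<in> closed_segment 0 c"
  shows "((\<lambda>s. g (x + s *\<^sub>R axis i 1)) has_vector_derivative gd (x + t *\<^sub>R axis i 1))
           (at t within closed_segment 0 c)"
proof -
  have "\<bar>t\<bar> \<le> \<bar>c\<bar>"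
    using assms(2) by (auto simp: closed_segment_eq_real_ivl split: if_splits)
  then show ?thesis
    by (intro has_vector_derivative_at_within[OF has_partial_norm_imp_has_vector_derivative] assms(1))
qed

lemma norm_diff_coordinate_le:
  fixes g gd :: "real^'n::finite \<Rightarrow> 'k::real_normed_field"
  assumes "\<And>t. \<bar>t\<bar> \<le> \<bar>c\<bar> \<Longrightarrow>
      has_partial (*) (\<lambda>_::unit. norm) g i (x + t *\<^sub>R axis i 1) (gd (x + t *\<^sub>R axis i 1))"
    and "\<And>t. \<bar>t\<bar> \<le> \<bar>c\<bar> \<Longrightarrow> norm (gd (x + t *\<^sub>R axis i 1)) \<le> M"
  shows "norm (g (x + c *\<^sub>R axis i 1) - g x) \<le> M * \<bar>c\<bar>"
proof -
  have "norm (g (x + c *\<^sub>R axis i 1) - g (x + 0 *\<^sub>R axis i 1)) \<le> M * norm (c - 0)"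
  proof (rule differentiable_bound[where S = "closed_segment 0 c"
        and f' = "\<lambda>t h. h *\<^sub>R gd (x + t *\<^sub>R axis i 1)"])
    fix t assume t: "t \<in> closed_segment 0 c"
    show "((\<lambda>s. g (x + s *\<^sub>R axis i 1)) has_derivative (\<lambda>h. h *\<^sub>R gd (x + t *\<^sub>R axis i 1)))
        (at t within closed_segment 0 c)"
      using has_vector_derivative_on_coordinate_segment[OF assms(1) t]
      by (simp add: has_vector_derivative_def)
    have "\<bar>t\<bar> \<le> \<bar>c\<bar>" using t by (auto simp: closed_segment_eq_real_ivl split: if_splits)
    then show "onorm (\<lambda>h. h *\<^sub>R gd (x + t *\<^sub>R axis i 1)) \<le> M"
      using assms(2) by (simp add: onorm_scaleR_left onorm_id)
  qed (simp_all add: convex_closed_segment)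
  then show ?thesis by simp
qed

lemma difference_quotient_hoelder_bound:
  fixes g gd :: "real^'n::finite \<Rightarrow> 'k::real_normed_field"
  assumes "\<And>t. \<bar>t\<bar> \<le> \<bar>h\<bar> \<Longrightarrow>
      has_partial (*) (\<lambda>_::unit. norm) g i (x + t *\<^sub>R axis i 1) (gd (x + t *\<^sub>R axis i 1))"
    and hoelder: "\<And>t. \<bar>t\<bar> \<le> \<bar>h\<bar> \<Longrightarrow> norm (gd (x + t *\<^sub>R axis i 1) - gd x) \<le> C * \<bar>t\<bar> powr \<gamma>"
    and "h \<noteq> 0" "0 \<le> C" "0 \<le> \<gamma>"
  shows "norm (of_real (1/h) * (g (x + h *\<^sub>R axis i 1) - g x) - gd x) \<le> C * \<bar>h\<bar> powr \<gamma>"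
proof -
  let ?S = "closed_segment 0 h"
  have "norm (g (x + h *\<^sub>R axis i 1) - g (x + 0 *\<^sub>R axis i 1) - (h - 0) *\<^sub>R gd (x + 0 *\<^sub>R axis i 1))
      \<le> norm (h - 0) * (C * \<bar>h\<bar> powr \<gamma>)"
  proof (rule vector_differentiable_bound_linearization[where S = ?S
        and f = "\<lambda>s. g (x + s *\<^sub>R axis i 1)" and f' = "\<lambda>s. gd (x + s *\<^sub>R axis i 1)"])
    fix t assume t: "t \<in> ?S"
    show "((\<lambda>s. g (x + s *\<^sub>R axis i 1)) has_vector_derivative gd (x + t *\<^sub>R axis i 1))
        (at t within ?S)"
      using has_vector_derivative_on_coordinate_segment[OF assms(1) t] .
  next
    fix t assume t: "t \<in> ?S"
    then have "\<bar>t\<bar> \<le> \<bar>h\<bar>" by (auto simp: closed_segment_eq_real_ivl split: if_splits)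
    have "norm (gd (x + t *\<^sub>R axis i 1) - gd x) \<le> C * \<bar>t\<bar> powr \<gamma>"
      using hoelder \<open>\<bar>t\<bar> \<le> \<bar>h\<bar>\<close> by blast
    also have "\<dots> \<le> C * \<bar>h\<bar> powr \<gamma>"
      using \<open>\<bar>t\<bar> \<le> \<bar>h\<bar>\<close> assms(4,5) by (intro mult_left_mono powr_mono2) auto
    finally show "norm (gd (x + t *\<^sub>R axis i 1) - gd (x + 0 *\<^sub>R axis i 1)) \<le> C * \<bar>h\<bar> powr \<gamma>"
      by simp
  qed simp_all
  then have "norm (g (x + h *\<^sub>R axis i 1) - g x - h *\<^sub>R gd x) / \<bar>h\<bar> \<le> C * \<bar>h\<bar> powr \<gamma>"
    using \<open>h \<noteq> 0\<close> by (simp add: divide_le_eq mult.commute)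
  moreover have "norm (g (x + h *\<^sub>R axis i 1) - g x - h *\<^sub>R gd x) / \<bar>h\<bar>
      = norm (of_real (1/h) * (g (x + h *\<^sub>R axis i 1) - g x) - gd x)"
    using norm_scaled_difference_quotient[OF \<open>h \<noteq> 0\<close>] by simp
  ultimately show ?thesis by simp
qed

lemma norm_diff_le_of_bounded_partials:
  fixes g :: "real^'n::finite \<Rightarrow> 'k::real_normed_field" and gd :: "'n \<Rightarrow> real^'n \<Rightarrow> 'k"
  assumes partial: "\<And>i z. z \<in> cball x r \<Longrightarrow> has_partial (*) (\<lambda>_::unit. norm) g i z (gd i z)"
    and bound: "\<And>i z. z \<in> cball x r \<Longrightarrow> norm (gd i z) \<le> M"
    and y: "y \<in> cball x r"
  shows "norm (g y - g x) \<le> M * real CARD('n) * norm (y - x)"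
proof -
  \<comment> \<open>\<open>z S\<close> agrees with \<open>y\<close> on \<open>S\<close> and with \<open>x\<close> elsewhere: walk from \<open>x\<close> to \<open>y\<close> one axis at a time.\<close>
  define z where "z S = (\<chi> j. if j \<in> S then y$j else x$j)" for S :: "'n set"
  have "norm (g (z S) - g x) \<le> M * real (card S) * norm (y - x)" for S
  proof (induction S rule: infinite_finite_induct)
    case empty
    have "z {} = x" by (simp add: z_def vec_eq_iff)
    then show ?case by simp
  next
    case (insert i S)
    define c where "c = y$i - x$i"
    have step: "z (insert i S) = z S + c *\<^sub>R axis i 1"
      using insert.hyps(2) by (auto simp: z_def vec_eq_iff axis_def c_def)
    have on_line: "z S + t *\<^sub>R axis i 1 \<in> cball x r" if "\<bar>t\<bar> \<le> \<bar>c\<bar>" for t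
    proof -
      have "norm (z S + t *\<^sub>R axis i 1 - x) \<le> norm (y - x)"
        by (rule norm_le_componentwise_cart)
           (use that insert.hyps(2) in \<open>auto simp: z_def axis_def c_def\<close>)
      then show ?thesis using y by (simp add: dist_norm norm_minus_commute)
    qed
    have "norm (g (z (insert i S)) - g (z S)) \<le> M * \<bar>c\<bar>"
      unfolding step by (intro norm_diff_coordinate_le[where gd = "gd i"] partial bound on_line)
    also have "\<dots> \<le> M * norm (y - x)"
      using bound[OF on_line[of 0]] component_le_norm_cart[of "y - x" i]
      by (intro mult_left_mono) (auto simp: c_def intro: order_trans[OF norm_ge_zero])
    finally have "norm (g (z (insert i S)) - g x)
        \<le> M * norm (y - x) + M * real (card S) * norm (y - x)"
      using insert.IH by (rule norm_diff_triangle_le)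
    then show ?case
      using insert.hyps by (simp add: algebra_simps)
  qed simp
  moreover have "z UNIV = y" by (simp add: z_def vec_eq_iff)
  ultimately show ?thesis by metis
qed

lemma compact_Union_cball:
  fixes K :: "'a::euclidean_space set"
  assumes "compact K"
  shows "compact (\<Union>x\<in>K. cball x e)"
proof -
  have "cball x e = (\<Union>y\<in>cball 0 e. {x + y})" for x :: 'a
  proof -
    have "cball x e = (+) x ` cball 0 e" by simp
    then show ?thesis by blast
  qed
  then have "(\<Union>x\<in>K. cball x e) = (\<Union>x\<in>K. \<Union>y\<in>cball 0 e. {x + y})"
    by (intro SUP_cong refl)
  then show ?thesis
    using compact_sums'[OF assms compact_cball] by simp
qed

lemma lipschitz_on_compact_of_continuous_partials:
  fixes g :: "real^'n::finite \<Rightarrow> 'k::real_normed_field" and gd :: "'n \<Rightarrow> real^'n \<Rightarrow> 'k"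
  assumes "open \<Omega>" "compact K" "K \<subseteq> \<Omega>"
    and partial: "\<And>i z. z \<in> \<Omega> \<Longrightarrow> has_partial (*) (\<lambda>_::unit. norm) g i z (gd i z)"
    and "\<And>i. continuous_on \<Omega> (gd i)" and "continuous_on \<Omega> g"
  shows "\<exists>L. \<forall>x\<in>K. \<forall>y\<in>K. norm (g x - g y) \<le> L * norm (x - y)"
proof -
  obtain e where e: "e > 0" "(\<Union>x\<in>K. cball x e) \<subseteq> \<Omega>"
    using compact_subset_open_imp_cball_epsilon_subset[OF assms(2,1,3)] by blast
  define K' where "K' = (\<Union>x\<in>K. cball x e)"
  have "compact K'"
    unfolding K'_def using \<open>compact K\<close> by (rule compact_Union_cball)
  have "bounded ((\<lambda>z. \<Sum>i\<in>UNIV. norm (gd i z)) ` K')"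
    using \<open>compact K'\<close> e(2) assms(5) unfolding K'_def
    by (intro compact_imp_bounded compact_continuous_image continuous_intros)
       (auto intro: continuous_on_subset)
  then obtain M where "M > 0" and M: "\<And>z. z \<in> K' \<Longrightarrow> norm (\<Sum>i\<in>UNIV. norm (gd i z)) \<le> M"
    unfolding bounded_pos by blast
  have bound_gd: "norm (gd i z) \<le> M" if "z \<in> K'" for i z
  proof -
    have "norm (gd i z) \<le> (\<Sum>j\<in>UNIV. norm (gd j z))" by (rule member_le_sum) auto
    also have "\<dots> \<le> M" using M[OF that] by (metis abs_ge_self order_trans real_norm_def)
    finally show ?thesis .
  qed
  obtain B where "B > 0" and B: "\<And>x. x \<in> K \<Longrightarrow> norm (g x) \<le> B"
    using compact_imp_bounded[OF compact_continuous_image[OF continuous_on_subset[OF assms(6,3)] assms(2)]]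
    unfolding bounded_pos by auto
  have "norm (g x - g y) \<le> (M * real CARD('n) + 2 * B / e) * norm (x - y)" if "x \<in> K" "y \<in> K" for x y
  proof (cases "norm (x - y) \<le> e")
    case True
    have cball_K': "cball y e \<subseteq> K'" using \<open>y \<in> K\<close> unfolding K'_def by blast
    have "norm (g x - g y) \<le> M * real CARD('n) * norm (x - y)"
    proof (rule norm_diff_le_of_bounded_partials[where gd = gd])
      fix i z assume "z \<in> cball y e"
      then have "z \<in> K'" using cball_K' by blast
      then show "has_partial (*) (\<lambda>_::unit. norm) g i z (gd i z)"
        using partial e(2) unfolding K'_def by blast
      show "norm (gd i z) \<le> M" using bound_gd[OF \<open>z \<in> K'\<close>] .
    next
      show "x \<in> cball y e" using True by (simp add: dist_norm norm_minus_commute)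
    qed
    also have "\<dots> \<le> (M * real CARD('n) + 2 * B / e) * norm (x - y)"
      using \<open>B > 0\<close> e(1) by (intro mult_right_mono) auto
    finally show ?thesis .
  next
    case False
    have "norm (g x - g y) \<le> 2 * B"
      using norm_triangle_ineq4[of "g x" "g y"] B[OF \<open>x \<in> K\<close>] B[OF \<open>y \<in> K\<close>] by simp
    also have "\<dots> = (2 * B / e) * e" using e by simp
    also have "\<dots> \<le> (2 * B / e) * norm (x - y)"
      using False e \<open>B > 0\<close> by (intro mult_left_mono) auto
    also have "\<dots> \<le> (M * real CARD('n) + 2 * B / e) * norm (x - y)"
      using \<open>M > 0\<close> by (intro mult_right_mono) auto
    finally show ?thesis .
  qed
  then show ?thesis by blast
qed

lemma tendsto_zero_if_powr_bound:
  fixes f :: "real \<Rightarrow> 'b::real_normed_vector"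
  assumes "0 < d" "0 < \<gamma>" "\<And>h. h \<noteq> 0 \<Longrightarrow> \<bar>h\<bar> \<le> d \<Longrightarrow> norm (f h) \<le> C * \<bar>h\<bar> powr \<gamma>"
  shows "(f \<longlongrightarrow> 0) (at 0)"
proof (rule Lim_null_comparison)
  show "\<forall>\<^sub>F h in at 0. norm (f h) \<le> C * \<bar>h\<bar> powr \<gamma>"
    unfolding eventually_at using assms by (intro exI[of _ d]) auto
  have "((\<lambda>h::real. \<bar>h\<bar> powr \<gamma>) \<longlongrightarrow> 0) (at 0)"
    by (rule tendsto_zero_powrI[OF tendsto_rabs_zero[OF tendsto_ident_at] tendsto_const _ \<open>0 < \<gamma>\<close>]) simp
  then show "((\<lambda>h. C * \<bar>h\<bar> powr \<gamma>) \<longlongrightarrow> 0) (at 0)" by (rule tendsto_mult_right_zero)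
qed

lemma norm_diff_le_if_hoelder_at_0:
  fixes u :: "real \<Rightarrow> 'b::real_normed_vector"
  assumes "\<forall>h. h \<noteq> 0 \<and> \<bar>h\<bar> \<le> d \<longrightarrow> norm (u h - w) \<le> C * \<bar>h\<bar> powr \<gamma>"
  shows "\<forall>h h'. h \<noteq> 0 \<and> \<bar>h\<bar> \<le> d \<and> h' \<noteq> 0 \<and> \<bar>h'\<bar> \<le> d \<longrightarrow>
    norm (u h - u h') \<le> C * (\<bar>h\<bar> powr \<gamma> + \<bar>h'\<bar> powr \<gamma>)"
proof (intro allI impI)
  fix h h' assume "h \<noteq> 0 \<and> \<bar>h\<bar> \<le> d \<and> h' \<noteq> 0 \<and> \<bar>h'\<bar> \<le> d"
  then have "norm (u h - w) \<le> C * \<bar>h\<bar> powr \<gamma>" "norm (w - u h') \<le> C * \<bar>h'\<bar> powr \<gamma>"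
    using assms by (auto simp: norm_minus_commute)
  then show "norm (u h - u h') \<le> C * (\<bar>h\<bar> powr \<gamma> + \<bar>h'\<bar> powr \<gamma>)"
    unfolding distrib_left by (rule norm_diff_triangle_le)
qed

definition hoelder_on ::
    "('a \<Rightarrow> 'e::ab_group_add \<Rightarrow> real) \<Rightarrow> real \<Rightarrow> (real^'n::finite) set \<Rightarrow> (real^'n \<Rightarrow> 'e) \<Rightarrow> bool" where
  "hoelder_on P \<gamma> K u \<longleftrightarrow> (\<forall>a. \<exists>C. \<forall>x\<in>K. \<forall>y\<in>K. P a (u x - u y) \<le> C * norm (x - y) powr \<gamma>)"

lemma hoelder_on_norm_iff:
  "hoelder_on (\<lambda>_::unit. norm) \<gamma> K g \<longleftrightarrow> (\<exists>C. \<forall>x\<in>K. \<forall>y\<in>K. norm (g x - g y) \<le> C * norm (x - y) powr \<gamma>)"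
  by (simp add: hoelder_on_def)

lemma hoelder_on_cong:
  "(\<And>x. x \<in> K \<Longrightarrow> u x = u' x) \<Longrightarrow> hoelder_on P \<gamma> K u \<longleftrightarrow> hoelder_on P \<gamma> K u'"
  unfolding hoelder_on_def by simp

lemma le_powr_mult_powr:
  fixes d R \<gamma> :: real
  assumes "0 \<le> d" "d \<le> R" "\<gamma> \<le> 1"
  shows "d \<le> R powr (1 - \<gamma>) * d powr \<gamma>"
proof (cases "d = 0")
  case False
  then have "d = d powr (1 - \<gamma>) * d powr \<gamma>"
    using assms(1) by (simp flip: powr_add)
  also have "\<dots> \<le> R powr (1 - \<gamma>) * d powr \<gamma>"
    using assms by (intro mult_right_mono powr_mono2) auto
  finally show ?thesis .
qed simp

lemma hoelder_on_if_lipschitz: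
  fixes g :: "real^'n::finite \<Rightarrow> 'b::real_normed_vector"
  assumes "bounded K" and lipschitz: "\<forall>x\<in>K. \<forall>y\<in>K. norm (g x - g y) \<le> L * norm (x - y)"
    and "\<gamma> \<le> 1"
  shows "hoelder_on (\<lambda>_::unit. norm) \<gamma> K g"
proof -
  obtain R where R: "\<And>x. x \<in> K \<Longrightarrow> norm x \<le> R"
    using \<open>bounded K\<close> unfolding bounded_iff by blast
  have "norm (g x - g y) \<le> (\<bar>L\<bar> * (2 * R) powr (1 - \<gamma>)) * norm (x - y) powr \<gamma>"
    if "x \<in> K" "y \<in> K" for x y
  proof -
    have "norm (x - y) \<le> 2 * R"
      using R[OF that(1)] R[OF that(2)] norm_triangle_ineq4[of x y] by simp
    then have interpolate: "norm (x - y) \<le> (2 * R) powr (1 - \<gamma>) * norm (x - y) powr \<gamma>"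
      using \<open>\<gamma> \<le> 1\<close> by (intro le_powr_mult_powr) auto
    have "norm (g x - g y) \<le> L * norm (x - y)" using lipschitz that by blast
    also have "\<dots> \<le> \<bar>L\<bar> * norm (x - y)" by (intro mult_right_mono) auto
    also have "\<dots> \<le> \<bar>L\<bar> * ((2 * R) powr (1 - \<gamma>) * norm (x - y) powr \<gamma>)"
      using interpolate by (intro mult_left_mono) auto
    finally show ?thesis by (simp add: mult.assoc)
  qed
  then show ?thesis unfolding hoelder_on_norm_iff by blast
qed

lemma hoelder_on_if_continuous_partials:
  fixes g :: "real^'n::finite \<Rightarrow> 'k::real_normed_field" and gd :: "'n \<Rightarrow> real^'n \<Rightarrow> 'k"
  assumes "open \<Omega>" "compact K" "K \<subseteq> \<Omega>"
    and "\<And>i z. z \<in> \<Omega> \<Longrightarrow> has_partial (*) (\<lambda>_::unit. norm) g i z (gd i z)"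
    and "\<And>i. continuous_on \<Omega> (gd i)" and "continuous_on \<Omega> g"
    and "\<gamma> \<le> 1"
  shows "hoelder_on (\<lambda>_::unit. norm) \<gamma> K g"
proof -
  obtain L where L: "\<forall>x\<in>K. \<forall>y\<in>K. norm (g x - g y) \<le> L * norm (x - y)"
    using lipschitz_on_compact_of_continuous_partials[OF assms(1-6)] by blast
  show ?thesis
    by (rule hoelder_on_if_lipschitz[OF compact_imp_bounded[OF assms(2)] L \<open>\<gamma> \<le> 1\<close>])
qed

section \<open>Multi-indices and systems of partial derivatives\<close>

lemma mi_order_fun_upd:
  fixes \<beta> :: "'n::finite \<Rightarrow> nat"
  shows "mi_order (\<beta>(i := m)) + \<beta> i = mi_order \<beta> + m"
proof -
  have split: "mi_order \<delta> = \<delta> i + (\<Sum>j\<in>UNIV - {i}. \<delta> j)" for \<delta> :: "'n \<Rightarrow> nat"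
    unfolding mi_order_def by (rule sum.remove) auto
  have "(\<Sum>j\<in>UNIV - {i}. (\<beta>(i := m)) j) = (\<Sum>j\<in>UNIV - {i}. \<beta> j)"
    by (rule sum.cong) auto
  then show ?thesis using split[of \<beta>] split[of "\<beta>(i := m)"] by simp
qed

lemma mi_order_fun_upd_Suc: "mi_order (\<beta>(i := Suc (\<beta> i))) = Suc (mi_order \<beta>)"
  using mi_order_fun_upd[of \<beta> i "Suc (\<beta> i)"] by simp

lemma mi_order_eq_0_iff: "mi_order \<beta> = 0 \<longleftrightarrow> \<beta> = (\<lambda>_. 0)"
  unfolding mi_order_def by (auto simp: fun_eq_iff)

lemma mi_order_eq_Suc_imp:
  assumes "mi_order \<beta> = Suc n"
  obtains i \<beta>' where "mi_order \<beta>' = n" "\<beta> = \<beta>'(i := Suc (\<beta>' i))"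
proof -
  obtain i where "\<beta> i > 0"
    using assms mi_order_eq_0_iff[of \<beta>] by (auto simp: fun_eq_iff)
  then have "\<beta> = (\<beta>(i := \<beta> i - 1))(i := Suc ((\<beta>(i := \<beta> i - 1)) i))"
    by (auto simp: fun_eq_iff)
  moreover have "mi_order (\<beta>(i := \<beta> i - 1)) = n"
    using mi_order_fun_upd[of \<beta> i "\<beta> i - 1"] assms \<open>\<beta> i > 0\<close> by simp
  ultimately show ?thesis using that by blast
qed

lemma finite_mi_order_le: "finite {\<beta> :: 'n::finite \<Rightarrow> nat. mi_order \<beta> \<le> k}"
proof (rule finite_subset)
  have "\<beta> i \<le> mi_order \<beta>" for \<beta> :: "'n \<Rightarrow> nat" and i
    unfolding mi_order_def by (rule member_le_sum) auto
  then show "{\<beta> :: 'n \<Rightarrow> nat. mi_order \<beta> \<le> k} \<subseteq> Pi\<^sub>E UNIV (\<lambda>_. {..k})"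
    by (auto simp: PiE_def extensional_def intro: le_trans)
qed (simp add: finite_PiE)

lemma finite_uniform_constant:
  fixes Q :: "'b \<Rightarrow> 'j \<Rightarrow> real"
  assumes "finite S" "\<And>\<beta>. \<beta> \<in> S \<Longrightarrow> \<exists>C. \<forall>j\<in>J. Q \<beta> j \<le> C * w j"
    and "\<And>j. j \<in> J \<Longrightarrow> 0 \<le> w j"
  shows "\<exists>C. \<forall>\<beta>\<in>S. \<forall>j\<in>J. Q \<beta> j \<le> C * w j"
proof -
  obtain C where C: "\<And>\<beta> j. \<beta> \<in> S \<Longrightarrow> j \<in> J \<Longrightarrow> Q \<beta> j \<le> C \<beta> * w j"
    using assms(2) by metis
  have "Q \<beta> j \<le> (\<Sum>b\<in>S. \<bar>C b\<bar>) * w j" if "\<beta> \<in> S" "j \<in> J" for \<beta> j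
  proof -
    have "C \<beta> \<le> (\<Sum>b\<in>S. \<bar>C b\<bar>)"
      using member_le_sum[of \<beta> S "\<lambda>b. \<bar>C b\<bar>"] that assms(1) by simp
    then show ?thesis
      using C[OF that] assms(3)[OF that(2)] by (meson mult_right_mono order_trans)
  qed
  then show ?thesis by blast
qed

lemma deriv_system_Suc_imp:
  "deriv_system smul P \<Omega> (Suc k) f D \<Longrightarrow> deriv_system smul P \<Omega> k f D"
  unfolding deriv_system_def by auto

lemma deriv_system_norm_continuous_on:
  "deriv_system (*) (\<lambda>_::unit. norm) \<Omega> k g D \<Longrightarrow> mi_order \<beta> \<le> k \<Longrightarrow> continuous_on \<Omega> (D \<beta>)"
  unfolding deriv_system_def lc_continuous_on_norm_iff by blast

lemma deriv_system_norm_hoelder_on: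
  assumes D: "deriv_system (*) (\<lambda>_::unit. norm) \<Omega> k g D"
    and "open \<Omega>" "compact K" "K \<subseteq> \<Omega>" "mi_order \<beta> < k" "\<gamma> \<le> 1"
  shows "hoelder_on (\<lambda>_::unit. norm) \<gamma> K (D \<beta>)"
proof (rule hoelder_on_if_continuous_partials[where gd = "\<lambda>i. D (\<beta>(i := Suc (\<beta> i)))"])
  show "has_partial (*) (\<lambda>_::unit. norm) (D \<beta>) i z (D (\<beta>(i := Suc (\<beta> i))) z)" if "z \<in> \<Omega>" for i z
    using D \<open>mi_order \<beta> < k\<close> that unfolding deriv_system_def by blast
  show "continuous_on \<Omega> (D (\<beta>(i := Suc (\<beta> i))))" for i
    using \<open>mi_order \<beta> < k\<close> by (intro deriv_system_norm_continuous_on[OF D]) (simp add: mi_order_fun_upd_Suc)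
  show "continuous_on \<Omega> (D \<beta>)"
    using \<open>mi_order \<beta> < k\<close> by (intro deriv_system_norm_continuous_on[OF D]) simp
qed (use assms in auto)

lemma Ck_gamma_loc_if_bounded_hoelder:
  fixes D :: "('n::finite \<Rightarrow> nat) \<Rightarrow> real^'n \<Rightarrow> 'e::ab_group_add"
  assumes "deriv_system smul P \<Omega> k f D"
    and bounded: "\<And>\<beta> K a. mi_order \<beta> \<le> k \<Longrightarrow> compact K \<Longrightarrow> K \<subseteq> \<Omega> \<Longrightarrow> \<exists>C. \<forall>x\<in>K. P a (D \<beta> x) \<le> C"
    and hoelder: "\<And>\<beta> K. mi_order \<beta> = k \<Longrightarrow> compact K \<Longrightarrow> K \<subseteq> \<Omega> \<Longrightarrow> hoelder_on P \<gamma> K (D \<beta>)"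
  shows "Ck_gamma_loc smul P \<Omega> k \<gamma> f"
  unfolding Ck_gamma_loc_def
proof (rule exI[of _ D], intro conjI allI impI)
  show "deriv_system smul P \<Omega> k f D" by fact
  fix K a assume K: "compact K \<and> K \<subseteq> \<Omega>"
  have "\<exists>C. \<forall>\<beta>\<in>{\<beta>. mi_order \<beta> \<le> k}. \<forall>x\<in>K. P a (D \<beta> x) \<le> C * 1"
    using bounded K by (intro finite_uniform_constant[OF finite_mi_order_le]) auto
  then show "\<exists>C. \<forall>x\<in>K. \<forall>\<beta>. mi_order \<beta> \<le> k \<longrightarrow> P a (D \<beta> x) \<le> C" by auto
  have "\<exists>C. \<forall>\<beta>\<in>{\<beta>. mi_order \<beta> = k}. \<forall>j\<in>K \<times> K.
      (\<lambda>(x, y). P a (D \<beta> x - D \<beta> y)) j \<le> C * (\<lambda>(x, y). norm (x - y) powr \<gamma>) j"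
  proof (rule finite_uniform_constant)
    show "finite {\<beta> :: 'n \<Rightarrow> nat. mi_order \<beta> = k}"
      by (rule finite_subset[OF _ finite_mi_order_le[of k]]) auto
    fix \<beta> :: "'n \<Rightarrow> nat" assume "\<beta> \<in> {\<beta>. mi_order \<beta> = k}"
    then obtain C where "\<forall>x\<in>K. \<forall>y\<in>K. P a (D \<beta> x - D \<beta> y) \<le> C * norm (x - y) powr \<gamma>"
      using hoelder K unfolding hoelder_on_def by blast
    then show "\<exists>C. \<forall>j\<in>K \<times> K. (\<lambda>(x, y). P a (D \<beta> x - D \<beta> y)) j \<le> C * (\<lambda>(x, y). norm (x - y) powr \<gamma>) j"
      by (intro exI[of _ C]) auto
  qed (auto split: prod.splits)
  then show "\<exists>C. \<forall>\<beta>. mi_order \<beta> = k \<longrightarrow> (\<forall>x\<in>K. \<forall>y\<in>K. x \<noteq> y \<longrightarrow>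
      P a (D \<beta> x - D \<beta> y) \<le> C * norm (x - y) powr \<gamma>)" by fastforce
qed

lemma Ck_gamma_loc_scalarE:
  assumes "Ck_gamma_loc_scalar \<Omega> k \<gamma> g"
  obtains D where "deriv_system (*) (\<lambda>_::unit. norm) \<Omega> k g D"
    and "\<And>\<beta> K. mi_order \<beta> = k \<Longrightarrow> compact K \<Longrightarrow> K \<subseteq> \<Omega> \<Longrightarrow> hoelder_on (\<lambda>_::unit. norm) \<gamma> K (D \<beta>)"
proof -
  obtain D where D: "deriv_system (*) (\<lambda>_::unit. norm) \<Omega> k g D"
    and bounds: "\<forall>K. compact K \<and> K \<subseteq> \<Omega> \<longrightarrow> (\<forall>a::unit.
        (\<exists>C. \<forall>x\<in>K. \<forall>\<beta>. mi_order \<beta> \<le> k \<longrightarrow> norm (D \<beta> x) \<le> C)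
      \<and> (\<exists>C. \<forall>\<beta>. mi_order \<beta> = k \<longrightarrow> (\<forall>x\<in>K. \<forall>y\<in>K. x \<noteq> y \<longrightarrow>
            norm (D \<beta> x - D \<beta> y) \<le> C * norm (x - y) powr \<gamma>)))"
    using assms unfolding Ck_gamma_loc_def by (elim exE conjE) (rule that)
  have "hoelder_on (\<lambda>_::unit. norm) \<gamma> K (D \<beta>)"
    if \<beta>: "mi_order \<beta> = k" and K: "compact K" "K \<subseteq> \<Omega>" for \<beta> K
  proof -
    obtain C where C: "\<forall>x\<in>K. \<forall>y\<in>K. x \<noteq> y \<longrightarrow> norm (D \<beta> x - D \<beta> y) \<le> C * norm (x - y) powr \<gamma>"
      using bounds[rule_format, OF conjI[OF K]] \<beta> by blast
    have "norm (D \<beta> x - D \<beta> y) \<le> C * norm (x - y) powr \<gamma>" if xy: "x \<in> K" "y \<in> K" for x y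
    proof (cases "x = y")
      case False
      then show ?thesis using C xy by blast
    qed simp
    then show ?thesis unfolding hoelder_on_norm_iff by blast
  qed
  with D show thesis by (rule that)
qed

section \<open>Locally convex spaces and functionals determining boundedness\<close>

locale lcs =
  fixes smul :: "'k::real_normed_field \<Rightarrow> 'e::ab_group_add \<Rightarrow> 'e"
    and P :: "'a \<Rightarrow> 'e \<Rightarrow> real"
  assumes lcHs: "lcHs smul P"
begin

sublocale vector_space smul
  using lcHs unfolding lcHs_def by blast

lemma seminorm_add: "P a (x + y) \<le> P a x + P a y"
  and seminorm_smul: "P a (smul c x) = norm c * P a x"
  using lcHs unfolding lcHs_def seminorm_def by blast+

lemma seminorm_zero [simp]: "P a 0 = 0"
  using seminorm_smul[of a 0 0] by simp

lemma seminorm_minus: "P a (- x) = P a x"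
  using seminorm_smul[of a "-1" x] by simp

lemma seminorm_nonneg: "0 \<le> P a x"
  using seminorm_add[of a x "- x"] by (simp add: seminorm_minus)

lemma seminorm_diff_triangle: "P a (x - z) \<le> P a (x - y) + P a (y - z)"
  using seminorm_add[of a "x - y" "y - z"] by simp

lemma eq_0_if_seminorms_eq_0: "(\<And>a. P a x = 0) \<Longrightarrow> x = 0"
  using lcHs unfolding lcHs_def by blast

lemma seminorm_diff_le_if_tendsto:
  assumes "(\<lambda>n. P a (s n - v)) \<longlonglongrightarrow> 0"
    and "\<And>n. P a (x - s n) \<le> B + b n" "b \<longlonglongrightarrow> 0"
  shows "P a (x - v) \<le> B"
proof (rule LIMSEQ_le_const)
  show "(\<lambda>n. B + b n + P a (s n - v)) \<longlonglongrightarrow> B"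
    using tendsto_add[OF tendsto_add[OF tendsto_const assms(3)] assms(1)] by simp
  show "\<exists>N. \<forall>n\<ge>N. P a (x - v) \<le> B + b n + P a (s n - v)"
    using seminorm_diff_triangle[of a x v] assms(2) by (meson add_mono order_trans order_refl)
qed

lemma lc_continuous_on_if_hoelder_on:
  assumes "open \<Omega>" "0 < \<gamma>" and hoelder: "\<And>K. compact K \<Longrightarrow> K \<subseteq> \<Omega> \<Longrightarrow> hoelder_on P \<gamma> K u"
  shows "lc_continuous_on P \<Omega> u"
  unfolding lc_continuous_on_def
proof (intro ballI allI)
  fix x a assume "x \<in> \<Omega>"
  then obtain d where "d > 0" "cball x d \<subseteq> \<Omega>"
    using \<open>open \<Omega>\<close> open_contains_cball by blast
  then obtain C where C: "\<And>y. y \<in> cball x d \<Longrightarrow> P a (u y - u x) \<le> C * norm (y - x) powr \<gamma>"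
    using hoelder[OF compact_cball] \<open>d > 0\<close> unfolding hoelder_on_def by (meson centre_in_cball less_imp_le)
  show "((\<lambda>y. P a (u y - u x)) \<longlongrightarrow> 0) (at x within \<Omega>)"
  proof (rule Lim_null_comparison)
    show "\<forall>\<^sub>F y in at x within \<Omega>. norm (P a (u y - u x)) \<le> C * norm (y - x) powr \<gamma>"
      unfolding eventually_at using \<open>d > 0\<close> C seminorm_nonneg
      by (intro exI[of _ d]) (auto simp: dist_norm norm_minus_commute)
    have "((\<lambda>y. norm (y - x)) \<longlongrightarrow> 0) (at x within \<Omega>)"
      by (intro tendsto_norm_zero LIM_zero tendsto_ident_at)
    then have "((\<lambda>y. norm (y - x) powr \<gamma>) \<longlongrightarrow> 0) (at x within \<Omega>)"
      by (rule tendsto_zero_powrI[OF _ tendsto_const _ \<open>0 < \<gamma>\<close>]) simp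
    then show "((\<lambda>y. C * norm (y - x) powr \<gamma>) \<longlongrightarrow> 0) (at x within \<Omega>)"
      by (rule tendsto_mult_right_zero)
  qed
qed

lemma seminorm_le_gauge_fun:
  assumes "\<And>y. y \<in> D \<Longrightarrow> P a y \<le> M" "0 < M"
    and "0 < t" "y \<in> D" "z = smul (of_real t) y"
  shows "P a z \<le> M * gauge_fun smul D z"
proof -
  let ?T = "{t. 0 < t \<and> (\<exists>y\<in>D. z = smul (of_real t) y)}"
  have "P a z / M \<le> Inf ?T"
  proof (rule cInf_greatest)
    show "?T \<noteq> {}" using assms(3-5) by blast
  next
    fix t' assume "t' \<in> ?T"
    then obtain y' where "0 < t'" "y' \<in> D" "z = smul (of_real t') y'" by blast
    then have "P a z = t' * P a y'" by (simp add: seminorm_smul)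
    also have "\<dots> \<le> t' * M" using assms(1) \<open>y' \<in> D\<close> \<open>0 < t'\<close> by (intro mult_left_mono) auto
    finally show "P a z / M \<le> t'" using \<open>0 < M\<close> by (simp add: pos_divide_le_eq mult.commute)
  qed
  then show ?thesis
    using \<open>0 < M\<close> unfolding gauge_fun_def by (simp add: pos_divide_le_eq mult.commute)
qed

end

locale lcs_dual = lcs smul P
  for smul :: "'k::real_normed_field \<Rightarrow> 'e::ab_group_add \<Rightarrow> 'e" and P :: "'a \<Rightarrow> 'e \<Rightarrow> real" +
  fixes G :: "('e \<Rightarrow> 'k) set"
  assumes dual: "G \<subseteq> lc_dual smul P"
    and determines: "determines_boundedness P G"
begin

lemma dual_add: "l \<in> G \<Longrightarrow> l (x + y) = l x + l y"
  and dual_smul: "l \<in> G \<Longrightarrow> l (smul c x) = c * l x"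
  and dual_continuous: "l \<in> G \<Longrightarrow> \<exists>b C. \<forall>x. norm (l x) \<le> C * P b x"
  using dual unfolding lc_dual_def by blast+

lemma dual_zero: "l \<in> G \<Longrightarrow> l 0 = 0"
  using dual_smul[of l 0 0] by simp

lemma dual_diff: "l \<in> G \<Longrightarrow> l (x - y) = l x - l y"
  using dual_add[of l "x - y" y] by simp

lemma lc_bounded_if_weakly_bounded: "(\<And>l. l \<in> G \<Longrightarrow> \<exists>C. \<forall>x\<in>B. norm (l x) \<le> C) \<Longrightarrow> lc_bounded P B"
  using determines unfolding determines_boundedness_def by blast

lemma eq_0_if_dual_eq_0:
  assumes "\<And>l. l \<in> G \<Longrightarrow> l x = 0"
  shows "x = 0"
proof (rule eq_0_if_seminorms_eq_0)
  fix a
  have "lc_bounded P (range (\<lambda>n::nat. smul (of_nat n) x))"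
    by (intro lc_bounded_if_weakly_bounded) (auto simp: dual_smul assms intro: exI[of _ 0])
  then obtain C where "\<And>n::nat. real n * P a x \<le> C"
    unfolding lc_bounded_def by (metis rangeI seminorm_smul norm_of_nat)
  then show "P a x = 0"
    using seminorm_nonneg[of a x] reals_Archimedean3 by (metis linorder_not_le order.antisym)
qed

lemma eq_if_dual_eq: "(\<And>l. l \<in> G \<Longrightarrow> l x = l y) \<Longrightarrow> x = y"
  using eq_0_if_dual_eq_0[of "x - y"] by (simp add: dual_diff)

text \<open>Rescaling each \<open>u j\<close> by \<open>1 / \<rho> j\<close> turns a weak rate into weak boundedness, which
  \<open>G\<close> upgrades to boundedness in every seminorm.\<close>

lemma seminorm_le_if_weakly_le:
  assumes weak: "\<And>l. l \<in> G \<Longrightarrow> \<exists>C. \<forall>j\<in>J. norm (l (u j)) \<le> C * \<rho> j"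
    and "\<And>j. j \<in> J \<Longrightarrow> 0 \<le> \<rho> j"
  shows "\<exists>M. \<forall>j\<in>J. P a (u j) \<le> M * \<rho> j"
proof -
  let ?B = "(\<lambda>j. smul (of_real (1 / \<rho> j)) (u j)) ` {j\<in>J. 0 < \<rho> j}"
  have "lc_bounded P ?B"
  proof (rule lc_bounded_if_weakly_bounded)
    fix l assume "l \<in> G"
    then obtain C where C: "\<forall>j\<in>J. norm (l (u j)) \<le> C * \<rho> j" using weak by blast
    have "norm (l (u j)) / \<rho> j \<le> C" if "j \<in> J" "0 < \<rho> j" for j
      using C that by (simp add: pos_divide_le_eq)
    then show "\<exists>C. \<forall>x\<in>?B. norm (l x) \<le> C"
      using \<open>l \<in> G\<close> by (auto simp: dual_smul norm_mult norm_divide)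
  qed
  then obtain M where M: "\<And>y. y \<in> ?B \<Longrightarrow> P a y \<le> M" unfolding lc_bounded_def by blast
  have "P a (u j) \<le> M * \<rho> j" if "j \<in> J" for j
  proof (cases "\<rho> j = 0")
    case True
    have "u j = 0"
    proof (rule eq_0_if_dual_eq_0)
      fix l assume "l \<in> G"
      then show "l (u j) = 0" using weak[OF \<open>l \<in> G\<close>] that True by fastforce
    qed
    then show ?thesis using True by simp
  next
    case False
    then have "0 < \<rho> j" using assms(2)[OF that] by simp
    have "u j = smul (of_real (\<rho> j)) (smul (of_real (1 / \<rho> j)) (u j))"
      using \<open>0 < \<rho> j\<close> by (simp flip: of_real_mult)
    then have "P a (u j) = \<rho> j * P a (smul (of_real (1 / \<rho> j)) (u j))"
      using \<open>0 < \<rho> j\<close> by (metis seminorm_smul norm_of_real abs_of_pos)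
    also have "\<dots> \<le> \<rho> j * M"
      using M that \<open>0 < \<rho> j\<close> by (intro mult_left_mono) auto
    finally show ?thesis by (simp add: mult.commute)
  qed
  then show ?thesis by blast
qed

lemma hoelder_on_if_weakly_hoelder_on:
  assumes "\<And>l. l \<in> G \<Longrightarrow> hoelder_on (\<lambda>_::unit. norm) \<gamma> K (l \<circ> u)"
  shows "hoelder_on P \<gamma> K u"
  unfolding hoelder_on_def
proof
  fix a
  have "\<exists>M. \<forall>(x, y)\<in>K \<times> K. P a (u x - u y) \<le> M * norm (x - y) powr \<gamma>"
    using seminorm_le_if_weakly_le[where u = "\<lambda>(x, y). u x - u y" and J = "K \<times> K"
        and \<rho> = "\<lambda>(x, y). norm (x - y) powr \<gamma>"] assms
    by (fastforce simp: hoelder_on_norm_iff dual_diff)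
  then show "\<exists>C. \<forall>x\<in>K. \<forall>y\<in>K. P a (u x - u y) \<le> C * norm (x - y) powr \<gamma>" by fast
qed

lemma seminorm_diff_le_if_weakly_hoelder_at_0:
  fixes q :: "real \<Rightarrow> 'e"
  assumes weak: "\<And>l. l \<in> G \<Longrightarrow> \<exists>C. \<forall>h. h \<noteq> 0 \<and> \<bar>h\<bar> \<le> d \<longrightarrow> norm (l (q h) - w l) \<le> C * \<bar>h\<bar> powr \<gamma>"
  shows "\<exists>M. \<forall>h h'. h \<noteq> 0 \<and> \<bar>h\<bar> \<le> d \<and> h' \<noteq> 0 \<and> \<bar>h'\<bar> \<le> d \<longrightarrow>
    P a (q h - q h') \<le> M * (\<bar>h\<bar> powr \<gamma> + \<bar>h'\<bar> powr \<gamma>)"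
proof -
  let ?J = "{(h, h'). h \<noteq> 0 \<and> \<bar>h\<bar> \<le> d \<and> h' \<noteq> 0 \<and> \<bar>h'\<bar> \<le> d}"
  have "\<exists>M. \<forall>j\<in>?J. P a ((\<lambda>(h, h'). q h - q h') j) \<le> M * (\<lambda>(h, h'). \<bar>h\<bar> powr \<gamma> + \<bar>h'\<bar> powr \<gamma>) j"
  proof (rule seminorm_le_if_weakly_le)
    fix l assume "l \<in> G"
    then obtain C where "\<forall>h. h \<noteq> 0 \<and> \<bar>h\<bar> \<le> d \<longrightarrow> norm (l (q h) - w l) \<le> C * \<bar>h\<bar> powr \<gamma>"
      using weak by blast
    from norm_diff_le_if_hoelder_at_0[OF this]
    show "\<exists>C. \<forall>j\<in>?J. norm (l ((\<lambda>(h, h'). q h - q h') j)) \<le> C * (\<lambda>(h, h'). \<bar>h\<bar> powr \<gamma> + \<bar>h'\<bar> powr \<gamma>) j"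
      by (intro exI[of _ C]) (auto simp: dual_diff[OF \<open>l \<in> G\<close>])
  qed auto
  then obtain M where M: "\<forall>j\<in>?J. P a ((\<lambda>(h, h'). q h - q h') j) \<le> M * (\<lambda>(h, h'). \<bar>h\<bar> powr \<gamma> + \<bar>h'\<bar> powr \<gamma>) j"
    by blast
  have "P a (q h - q h') \<le> M * (\<bar>h\<bar> powr \<gamma> + \<bar>h'\<bar> powr \<gamma>)"
    if "h \<noteq> 0 \<and> \<bar>h\<bar> \<le> d \<and> h' \<noteq> 0 \<and> \<bar>h'\<bar> \<le> d" for h h'
    using M[rule_format, of "(h, h')"] that by simp
  then show ?thesis by blast
qed

lemma dual_tendsto:
  assumes "l \<in> G" "\<And>a. ((\<lambda>h. P a (q h - v)) \<longlongrightarrow> 0) F"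
  shows "((\<lambda>h. l (q h)) \<longlongrightarrow> l v) F"
proof -
  obtain b C where C: "\<And>x. norm (l x) \<le> C * P b x" using dual_continuous[OF assms(1)] by blast
  have "((\<lambda>h. l (q h) - l v) \<longlongrightarrow> 0) F"
  proof (rule Lim_null_comparison)
    show "\<forall>\<^sub>F h in F. norm (l (q h) - l v) \<le> C * P b (q h - v)"
      using C[of "q _ - v"] by (simp add: dual_diff[OF assms(1)])
    show "((\<lambda>h. C * P b (q h - v)) \<longlongrightarrow> 0) F" by (rule tendsto_mult_right_zero[OF assms(2)])
  qed
  then show ?thesis by (simp add: LIM_zero_iff)
qed

definition weak_polar :: "(('e \<Rightarrow> 'k) \<Rightarrow> real) \<Rightarrow> 'e set" where
  "weak_polar c = {x. \<forall>l\<in>G. norm (l x) \<le> c l}"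

lemma weak_polar_lc_closed: "lc_closed P (weak_polar c)"
  unfolding lc_closed_def
proof (intro allI impI)
  fix x assume approx: "\<forall>a. \<forall>\<epsilon>>0. \<exists>y\<in>weak_polar c. P a (x - y) < \<epsilon>"
  have "norm (l x) \<le> c l" if "l \<in> G" for l
  proof (rule field_le_epsilon)
    fix e :: real assume "0 < e"
    obtain b C where C: "\<And>z. norm (l z) \<le> C * P b z" using dual_continuous[OF \<open>l \<in> G\<close>] by blast
    obtain y where y: "y \<in> weak_polar c" "P b (x - y) < e / (\<bar>C\<bar> + 1)"
      using approx \<open>0 < e\<close> by (metis divide_pos_pos abs_ge_zero add_nonneg_pos zero_less_one)
    have "norm (l x) \<le> norm (l y) + norm (l (x - y))"
      using norm_triangle_sub[of "l x" "l y"] by (simp add: dual_diff[OF \<open>l \<in> G\<close>])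
    also have "norm (l (x - y)) \<le> \<bar>C\<bar> * P b (x - y)"
      using C[of "x - y"] seminorm_nonneg[of b "x - y"] by (meson abs_ge_self mult_right_mono order_trans)
    also have "\<bar>C\<bar> * P b (x - y) \<le> (\<bar>C\<bar> + 1) * P b (x - y)"
      using seminorm_nonneg[of b "x - y"] by (simp add: distrib_right)
    also have "\<dots> \<le> e"
      using y(2) by (simp add: pos_less_divide_eq mult.commute less_imp_le)
    finally show "norm (l x) \<le> c l + e" using y(1) \<open>l \<in> G\<close> unfolding weak_polar_def by auto
  qed
  then show "x \<in> weak_polar c" unfolding weak_polar_def by blast
qed

lemma weak_polar_lc_bounded: "lc_bounded P (weak_polar c)"
  by (rule lc_bounded_if_weakly_bounded) (auto simp: weak_polar_def)

lemma weak_polar_abs_convex: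
  assumes "\<And>l. l \<in> G \<Longrightarrow> 0 \<le> c l"
  shows "abs_convex smul (weak_polar c)"
  unfolding abs_convex_def
proof (intro ballI allI impI)
  fix x y and s t :: 'k assume "x \<in> weak_polar c" "y \<in> weak_polar c" "norm s + norm t \<le> 1"
  have "norm (l (smul s x + smul t y)) \<le> c l" if "l \<in> G" for l
  proof -
    have "norm (l (smul s x + smul t y)) \<le> norm s * norm (l x) + norm t * norm (l y)"
      using that by (simp add: dual_add dual_smul norm_mult norm_triangle_ineq flip: norm_mult)
    also have "\<dots> \<le> norm s * c l + norm t * c l"
      using \<open>x \<in> _\<close> \<open>y \<in> _\<close> that unfolding weak_polar_def by (intro add_mono mult_left_mono) auto
    also have "\<dots> \<le> c l"
      using \<open>norm s + norm t \<le> 1\<close> assms[OF that] by (metis distrib_right mult_left_le_one_le norm_ge_zero add_nonneg_nonneg)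
    finally show ?thesis .
  qed
  then show "smul s x + smul t y \<in> weak_polar c" unfolding weak_polar_def by blast
qed

lemma zero_in_weak_polar: "(\<And>l. l \<in> G \<Longrightarrow> 0 \<le> c l) \<Longrightarrow> 0 \<in> weak_polar c"
  unfolding weak_polar_def by (simp add: dual_zero)

lemma rescaled_in_weak_polar:
  assumes "0 < \<rho>" "\<And>l. l \<in> G \<Longrightarrow> norm (l z) \<le> \<rho> * c l"
  shows "smul (of_real (1/\<rho>)) z \<in> weak_polar c"
  using assms unfolding weak_polar_def
  by (auto simp: dual_smul norm_mult norm_divide pos_divide_le_eq mult.commute)

lemma gauge_fun_weak_polar_le:
  assumes "0 < \<rho>" "\<And>l. l \<in> G \<Longrightarrow> norm (l z) \<le> \<rho> * c l"
  shows "gauge_fun smul (weak_polar c) z \<le> \<rho>"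
  unfolding gauge_fun_def
proof (rule cInf_lower)
  have "z = smul (of_real \<rho>) (smul (of_real (1/\<rho>)) z)"
    using \<open>0 < \<rho>\<close> by (simp flip: of_real_mult)
  then show "\<rho> \<in> {t. 0 < t \<and> (\<exists>y\<in>weak_polar c. z = smul (of_real t) y)}"
    using rescaled_in_weak_polar[of \<rho> z c, OF assms] \<open>0 < \<rho>\<close> by blast
qed (auto intro: bdd_belowI[of _ 0])

lemma in_span_set_weak_polar:
  assumes "\<And>l. l \<in> G \<Longrightarrow> 0 \<le> c l" "0 \<le> \<rho>" "\<And>l. l \<in> G \<Longrightarrow> norm (l z) \<le> \<rho> * c l"
  shows "z \<in> span_set smul (weak_polar c)"
proof -
  define N where "N = nat \<lceil>\<rho>\<rceil> + 1"
  have "0 < real N" "\<rho> \<le> real N" unfolding N_def by linarith+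
  have "norm (l z) \<le> real N * c l" if "l \<in> G" for l
    using assms(1,3)[OF that] \<open>\<rho> \<le> real N\<close> by (meson mult_right_mono order_trans)
  then have "smul (of_real (1 / real N)) z \<in> weak_polar c"
    using \<open>0 < real N\<close> by (intro rescaled_in_weak_polar)
  moreover have "z = smul (of_nat N) (smul (of_real (1 / real N)) z)"
    using \<open>0 < real N\<close> by (simp flip: of_real_mult)
  ultimately show ?thesis unfolding span_set_def by blast
qed

lemma gauge_fun_weak_polar_cauchy:
  assumes "\<And>l. l \<in> G \<Longrightarrow> 0 \<le> c l"
    and weak: "\<And>l m n. l \<in> G \<Longrightarrow> norm (l (s m) - l (s n)) \<le> c l * (r m + r n)"
    and "\<And>n. 0 \<le> r n" "r \<longlonglongrightarrow> 0" "0 < \<epsilon>"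
  shows "\<exists>N. \<forall>m\<ge>N. \<forall>n\<ge>N. gauge_fun smul (weak_polar c) (s m - s n) < \<epsilon>"
proof -
  obtain N where N: "\<And>n. n \<ge> N \<Longrightarrow> r n < \<epsilon> / 4"
    using \<open>r \<longlonglongrightarrow> 0\<close> \<open>0 < \<epsilon>\<close> assms(3) unfolding LIMSEQ_iff
    by (metis divide_pos_pos zero_less_numeral real_norm_def abs_of_nonneg diff_zero)
  have "gauge_fun smul (weak_polar c) (s m - s n) \<le> \<epsilon> / 2" if "m \<ge> N" "n \<ge> N" for m n
  proof (rule gauge_fun_weak_polar_le)
    fix l assume "l \<in> G"
    have "norm (l (s m - s n)) \<le> c l * (r m + r n)"
      using weak[OF \<open>l \<in> G\<close>] by (simp add: dual_diff[OF \<open>l \<in> G\<close>])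
    also have "\<dots> \<le> c l * (\<epsilon> / 2)"
      using N[OF that(1)] N[OF that(2)] assms(1)[OF \<open>l \<in> G\<close>] by (intro mult_left_mono) auto
    finally show "norm (l (s m - s n)) \<le> \<epsilon> / 2 * c l" by (simp add: mult.commute)
  qed (use \<open>0 < \<epsilon>\<close> in simp)
  moreover have "\<epsilon> / 2 < \<epsilon>" using \<open>0 < \<epsilon>\<close> by simp
  ultimately show ?thesis using le_less_trans by blast
qed

lemma seminorm_le_gauge_fun_weak_polar:
  "\<exists>M. \<forall>z \<rho>. 0 < \<rho> \<longrightarrow> (\<forall>l\<in>G. norm (l z) \<le> \<rho> * c l) \<longrightarrow>
    P a z \<le> M * gauge_fun smul (weak_polar c) z"
proof -
  obtain M0 where "\<And>y. y \<in> weak_polar c \<Longrightarrow> P a y \<le> M0"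
    using weak_polar_lc_bounded unfolding lc_bounded_def by blast
  then obtain M where "0 < M" and M: "\<And>y. y \<in> weak_polar c \<Longrightarrow> P a y \<le> M"
    by (metis max.strict_coboundedI2 zero_less_one max.coboundedI1)
  have "P a z \<le> M * gauge_fun smul (weak_polar c) z"
    if "0 < \<rho>" and weak: "\<forall>l\<in>G. norm (l z) \<le> \<rho> * c l" for z \<rho>
  proof -
    from weak have in_polar: "smul (of_real (1 / \<rho>)) z \<in> weak_polar c"
      using \<open>0 < \<rho>\<close> by (intro rescaled_in_weak_polar) auto
    have "z = smul (of_real \<rho>) (smul (of_real (1 / \<rho>)) z)"
      using \<open>0 < \<rho>\<close> by (simp flip: of_real_mult)
    from seminorm_le_gauge_fun[OF M \<open>0 < M\<close> \<open>0 < \<rho>\<close> in_polar this] show ?thesis .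
  qed
  then show ?thesis by blast
qed

lemma seminorm_tendsto_if_gauge_fun_tendsto:
  assumes "\<And>l. l \<in> G \<Longrightarrow> 0 \<le> c l"
    and "(\<lambda>n. gauge_fun smul (weak_polar c) (u n)) \<longlonglongrightarrow> 0"
    and "\<And>n. 0 < \<rho> n" "\<And>l n. l \<in> G \<Longrightarrow> norm (l (u n)) \<le> \<rho> n * c l"
  shows "(\<lambda>n. P a (u n)) \<longlonglongrightarrow> 0"
proof -
  obtain M where M: "\<forall>z \<rho>. 0 < \<rho> \<longrightarrow> (\<forall>l\<in>G. norm (l z) \<le> \<rho> * c l) \<longrightarrow>
      P a z \<le> M * gauge_fun smul (weak_polar c) z"
    using seminorm_le_gauge_fun_weak_polar[of c a] by (elim exE) (rule that)
  have "P a (u n) \<le> M * gauge_fun smul (weak_polar c) (u n)" for n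
    using M[rule_format, OF assms(3)] assms(4) by blast
  then have "\<forall>\<^sub>F n in sequentially. norm (P a (u n)) \<le> M * gauge_fun smul (weak_polar c) (u n)"
    by (simp add: seminorm_nonneg)
  then show ?thesis
    by (rule Lim_null_comparison) (rule tendsto_mult_right_zero[OF assms(2)])
qed

end

section \<open>Weak differentiability in locally complete spaces\<close>

locale lcs_dual_complete = lcs_dual smul P G
  for smul :: "'k::real_normed_field \<Rightarrow> 'e::ab_group_add \<Rightarrow> 'e"
    and P :: "'a \<Rightarrow> 'e \<Rightarrow> real" and G :: "('e \<Rightarrow> 'k) set" +
  assumes locally_complete: "locally_complete smul P"
begin

text \<open>The sequence is moved into \<open>span_set smul (weak_polar c)\<close>, where it is Cauchy for the
  gauge; local completeness turns \<open>weak_polar c\<close> into a Banach disc.\<close>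

lemma convergent_if_weakly_cauchy:
  fixes s :: "nat \<Rightarrow> 'e" and r :: "nat \<Rightarrow> real"
  assumes "\<And>n. 0 \<le> r n" "r \<longlonglongrightarrow> 0"
    and weak: "\<And>l. l \<in> G \<Longrightarrow> \<exists>C. \<forall>m n. norm (l (s m) - l (s n)) \<le> C * (r m + r n)"
  shows "\<exists>v. \<forall>a. (\<lambda>n. P a (s n - v)) \<longlonglongrightarrow> 0"
proof -
  have "\<exists>C\<ge>0. \<forall>m n. norm (l (s m) - l (s n)) \<le> C * (r m + r n)" if l: "l \<in> G" for l
  proof -
    obtain C where "\<forall>m n. norm (l (s m) - l (s n)) \<le> C * (r m + r n)" using weak[OF l] by blast
    then have "\<forall>m n. norm (l (s m) - l (s n)) \<le> max C 0 * (r m + r n)"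
      using assms(1) by (meson add_nonneg_nonneg max.cobounded1 mult_right_mono order_trans)
    then show ?thesis by (intro exI[of _ "max C 0"]) auto
  qed
  then obtain c where c_nonneg: "\<And>l. l \<in> G \<Longrightarrow> 0 \<le> c l"
    and c: "\<And>l m n. l \<in> G \<Longrightarrow> norm (l (s m) - l (s n)) \<le> c l * (r m + r n)"
    by metis
  define D where "D = weak_polar c"
  define t where "t n = s n - s 0" for n
  have weak_t: "norm (l (t n - x)) \<le> (r n + r 0 + N) * c l"
    if "l \<in> G" "norm (l x) \<le> N * c l" for l n x N
  proof -
    have "norm (l (t n - x)) \<le> norm (l (s n) - l (s 0)) + norm (l x)"
      using that(1) by (simp add: t_def dual_diff norm_triangle_ineq4)
    also have "\<dots> \<le> (r n + r 0 + N) * c l"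
      using c[OF that(1), of n 0] that(2) by (simp add: algebra_simps)
    finally show ?thesis .
  qed
  have t_span: "t n \<in> span_set smul D" for n
  proof -
    have "norm (l (t n)) \<le> (r n + r 0) * c l" if "l \<in> G" for l
      using weak_t[OF that, where x = 0 and N = 0] dual_zero[OF that] by simp
    then show ?thesis
      unfolding D_def using c_nonneg assms(1)[of n] assms(1)[of 0]
      by (intro in_span_set_weak_polar[where \<rho> = "r n + r 0"]) auto
  qed
  have cauchy: "\<exists>N. \<forall>m\<ge>N. \<forall>n\<ge>N. gauge_fun smul D (t m - t n) < \<epsilon>" if "0 < \<epsilon>" for \<epsilon>
    using gauge_fun_weak_polar_cauchy[OF c_nonneg c assms(1,2) that] unfolding D_def t_def by simp
  have "lc_closed P D \<and> lc_bounded P D \<and> abs_convex smul D \<and> D \<noteq> {}"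
    unfolding D_def using weak_polar_lc_closed weak_polar_lc_bounded
      weak_polar_abs_convex[of c, OF c_nonneg] zero_in_weak_polar[of c, OF c_nonneg] by blast
  then have "\<exists>x\<in>span_set smul D. (\<lambda>n. gauge_fun smul D (t n - x)) \<longlonglongrightarrow> 0"
    using locally_complete t_span cauchy unfolding locally_complete_def by blast
  then obtain x where "x \<in> span_set smul D" and x: "(\<lambda>n. gauge_fun smul D (t n - x)) \<longlonglongrightarrow> 0"
    by blast
  then obtain N y where "y \<in> D" "x = smul (of_nat N) y" unfolding span_set_def by blast
  then have weak_x: "norm (l x) \<le> real N * c l" if "l \<in> G" for l
    using that unfolding D_def weak_polar_def by (simp add: dual_smul norm_mult mult_left_mono)
  have "(\<lambda>n. P a (t n - x)) \<longlonglongrightarrow> 0" for a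
  proof (rule seminorm_tendsto_if_gauge_fun_tendsto[where c = c and \<rho> = "\<lambda>n. r n + r 0 + real N + 1"])
    show "(\<lambda>n. gauge_fun smul (weak_polar c) (t n - x)) \<longlonglongrightarrow> 0" using x unfolding D_def .
    show "0 \<le> c l" if "l \<in> G" for l using c_nonneg[OF that] .
    show "0 < r n + r 0 + real N + 1" for n using assms(1)[of n] assms(1)[of 0] by linarith
    show "norm (l (t n - x)) \<le> (r n + r 0 + real N + 1) * c l" if "l \<in> G" for l n
      using weak_t[OF that weak_x[OF that], of n] c_nonneg[OF that] by (simp add: algebra_simps)
  qed
  then have "(\<lambda>n. P a (s n - (s 0 + x))) \<longlonglongrightarrow> 0" for a
    by (simp add: t_def diff_diff_eq)
  then show ?thesis by blast
qed

lemma limit_at_0_if_weakly_hoelder: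
  fixes q :: "real \<Rightarrow> 'e" and w :: "('e \<Rightarrow> 'k) \<Rightarrow> 'k"
  assumes "0 < d" "0 < \<gamma>"
    and weak: "\<And>l. l \<in> G \<Longrightarrow> \<exists>C. \<forall>h. h \<noteq> 0 \<and> \<bar>h\<bar> \<le> d \<longrightarrow> norm (l (q h) - w l) \<le> C * \<bar>h\<bar> powr \<gamma>"
  shows "\<exists>v. (\<forall>l\<in>G. l v = w l) \<and> (\<forall>a. ((\<lambda>h. P a (q h - v)) \<longlongrightarrow> 0) (at 0))"
proof -
  \<comment> \<open>A limit candidate comes from the sequence \<open>hs\<close>; the uniform seminorm estimate then
    controls all \<open>h\<close>.\<close>
  define hs where "hs n = d * inverse (real (Suc n))" for n
  have hs: "hs n \<noteq> 0" "\<bar>hs n\<bar> \<le> d" for n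
    using \<open>0 < d\<close> by (auto simp: hs_def field_simps)
  define r where "r n = \<bar>hs n\<bar> powr \<gamma>" for n
  have "hs \<longlonglongrightarrow> 0"
    unfolding hs_def by (rule tendsto_mult_right_zero[OF LIMSEQ_inverse_real_of_nat])
  then have "r \<longlonglongrightarrow> 0"
    unfolding r_def by (rule tendsto_zero_powrI[OF tendsto_rabs_zero tendsto_const _ \<open>0 < \<gamma>\<close>]) simp
  have "\<exists>v. \<forall>a. (\<lambda>n. P a (q (hs n) - v)) \<longlonglongrightarrow> 0"
  proof (rule convergent_if_weakly_cauchy[OF _ \<open>r \<longlonglongrightarrow> 0\<close>])
    fix l assume "l \<in> G"
    then obtain C where "\<forall>h. h \<noteq> 0 \<and> \<bar>h\<bar> \<le> d \<longrightarrow> norm (l (q h) - w l) \<le> C * \<bar>h\<bar> powr \<gamma>"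
      using weak by blast
    from norm_diff_le_if_hoelder_at_0[OF this]
    show "\<exists>C. \<forall>m n. norm (l (q (hs m)) - l (q (hs n))) \<le> C * (r m + r n)"
      unfolding r_def by (intro exI[of _ C] allI) (simp add: hs)
  qed (simp add: r_def)
  then obtain v where v: "\<And>a. (\<lambda>n. P a (q (hs n) - v)) \<longlonglongrightarrow> 0" by blast
  have "((\<lambda>h. P a (q h - v)) \<longlongrightarrow> 0) (at 0)" for a
  proof -
    obtain M where M: "\<forall>h h'. h \<noteq> 0 \<and> \<bar>h\<bar> \<le> d \<and> h' \<noteq> 0 \<and> \<bar>h'\<bar> \<le> d \<longrightarrow>
        P a (q h - q h') \<le> M * (\<bar>h\<bar> powr \<gamma> + \<bar>h'\<bar> powr \<gamma>)"
      using seminorm_diff_le_if_weakly_hoelder_at_0[where q = q and w = w and a = a, OF weak] by blast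
    have "P a (q h - v) \<le> M * \<bar>h\<bar> powr \<gamma>" if "h \<noteq> 0" "\<bar>h\<bar> \<le> d" for h
    proof (rule seminorm_diff_le_if_tendsto[OF v])
      show "P a (q h - q (hs n)) \<le> M * \<bar>h\<bar> powr \<gamma> + M * r n" for n
        using M that hs[of n] unfolding r_def by (simp add: distrib_left)
      show "(\<lambda>n. M * r n) \<longlonglongrightarrow> 0" by (rule tendsto_mult_right_zero[OF \<open>r \<longlonglongrightarrow> 0\<close>])
    qed
    then show ?thesis
      using seminorm_nonneg by (intro tendsto_zero_if_powr_bound[OF \<open>0 < d\<close> \<open>0 < \<gamma>\<close>]) auto
  qed
  moreover have "l v = w l" if l: "l \<in> G" for l
  proof (rule tendsto_unique[OF at_neq_bot])
    show "((\<lambda>h. l (q h)) \<longlongrightarrow> l v) (at 0)"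
      by (rule dual_tendsto[OF l calculation])
    obtain C where "\<forall>h. h \<noteq> 0 \<and> \<bar>h\<bar> \<le> d \<longrightarrow> norm (l (q h) - w l) \<le> C * \<bar>h\<bar> powr \<gamma>"
      using weak[OF l] by blast
    then have "((\<lambda>h. l (q h) - w l) \<longlongrightarrow> 0) (at 0)"
      by (intro tendsto_zero_if_powr_bound[OF \<open>0 < d\<close> \<open>0 < \<gamma>\<close>]) auto
    then show "((\<lambda>h. l (q h)) \<longlongrightarrow> w l) (at 0)" by (simp add: LIM_zero_iff)
  qed
  ultimately show ?thesis by blast
qed

context
  fixes \<Omega> :: "(real^'n::finite) set" and k :: nat and \<gamma> :: real and f :: "real^'n \<Rightarrow> 'e"
    and Dl :: "('e \<Rightarrow> 'k) \<Rightarrow> ('n \<Rightarrow> nat) \<Rightarrow> real^'n \<Rightarrow> 'k"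
  assumes "open \<Omega>" and "0 < \<gamma>"
    and scalar_derivs: "\<And>l. l \<in> G \<Longrightarrow> deriv_system (*) (\<lambda>_::unit. norm) \<Omega> k (l \<circ> f) (Dl l)"
    and scalar_hoelder: "\<And>l \<beta> K. l \<in> G \<Longrightarrow> mi_order \<beta> \<le> k \<Longrightarrow> compact K \<Longrightarrow> K \<subseteq> \<Omega> \<Longrightarrow>
      hoelder_on (\<lambda>_::unit. norm) \<gamma> K (Dl l \<beta>)"
begin

lemma scalar_difference_quotient_hoelder:
  assumes "l \<in> G" "mi_order \<beta> < k" "0 < d" "cball x d \<subseteq> \<Omega>"
  shows "\<exists>C. \<forall>h. h \<noteq> 0 \<and> \<bar>h\<bar> \<le> d \<longrightarrow>
    norm (of_real (1/h) * (Dl l \<beta> (x + h *\<^sub>R axis i 1) - Dl l \<beta> x) - Dl l (\<beta>(i := Suc (\<beta> i))) x)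
      \<le> C * \<bar>h\<bar> powr \<gamma>"
proof -
  let ?\<beta>' = "\<beta>(i := Suc (\<beta> i))"
  define S where "S = (\<lambda>t. x + t *\<^sub>R axis i 1) ` {-d..d}"
  have on_S: "x + t *\<^sub>R axis i 1 \<in> S" if "\<bar>t\<bar> \<le> d" for t
    unfolding S_def using that by (intro image_eqI[of _ _ t]) auto
  have "x \<in> S" using on_S[of 0] \<open>0 < d\<close> by simp
  have "compact S" unfolding S_def by (intro compact_continuous_image continuous_intros compact_Icc)
  have "x + t *\<^sub>R axis i 1 \<in> \<Omega>" if "\<bar>t\<bar> \<le> d" for t
    using that \<open>cball x d \<subseteq> \<Omega>\<close> by (auto simp: dist_norm)
  then have "S \<subseteq> \<Omega>"
    unfolding S_def by (auto simp: abs_le_iff)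
  obtain C where C: "\<forall>y\<in>S. \<forall>z\<in>S. norm (Dl l ?\<beta>' y - Dl l ?\<beta>' z) \<le> C * norm (y - z) powr \<gamma>"
    using scalar_hoelder[OF \<open>l \<in> G\<close> _ \<open>compact S\<close> \<open>S \<subseteq> \<Omega>\<close>, of ?\<beta>'] \<open>mi_order \<beta> < k\<close>
    unfolding hoelder_on_norm_iff mi_order_fun_upd_Suc by auto
  have "norm (of_real (1/h) * (Dl l \<beta> (x + h *\<^sub>R axis i 1) - Dl l \<beta> x) - Dl l ?\<beta>' x) \<le> max C 0 * \<bar>h\<bar> powr \<gamma>"
    if "h \<noteq> 0" "\<bar>h\<bar> \<le> d" for h
  proof (rule difference_quotient_hoelder_bound)
    fix t :: real assume "\<bar>t\<bar> \<le> \<bar>h\<bar>"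
    then have "x + t *\<^sub>R axis i 1 \<in> S" using that on_S by simp
    then show "has_partial (*) (\<lambda>_::unit. norm) (Dl l \<beta>) i (x + t *\<^sub>R axis i 1) (Dl l ?\<beta>' (x + t *\<^sub>R axis i 1))"
      using scalar_derivs[OF \<open>l \<in> G\<close>] \<open>mi_order \<beta> < k\<close> \<open>S \<subseteq> \<Omega>\<close>
      unfolding deriv_system_def by blast
    have "norm (Dl l ?\<beta>' (x + t *\<^sub>R axis i 1) - Dl l ?\<beta>' x) \<le> C * norm (x + t *\<^sub>R axis i 1 - x) powr \<gamma>"
      using C \<open>x + t *\<^sub>R axis i 1 \<in> S\<close> \<open>x \<in> S\<close> by blast
    also have "\<dots> \<le> max C 0 * \<bar>t\<bar> powr \<gamma>"
      by (simp add: mult_right_mono)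
    finally show "norm (Dl l ?\<beta>' (x + t *\<^sub>R axis i 1) - Dl l ?\<beta>' x) \<le> max C 0 * \<bar>t\<bar> powr \<gamma>" .
  qed (use that \<open>0 < \<gamma>\<close> in auto)
  then show ?thesis by blast
qed

lemma has_partial_if_weakly_represented:
  fixes E :: "real^'n \<Rightarrow> 'e" and \<beta> :: "'n \<Rightarrow> nat"
  assumes rep: "\<And>y l. y \<in> \<Omega> \<Longrightarrow> l \<in> G \<Longrightarrow> l (E y) = Dl l \<beta> y"
    and "mi_order \<beta> < k" "x \<in> \<Omega>"
  shows "\<exists>v. (\<forall>l\<in>G. l v = Dl l (\<beta>(i := Suc (\<beta> i))) x) \<and> has_partial smul P E i x v"
proof -
  obtain d where "d > 0" "cball x d \<subseteq> \<Omega>"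
    using \<open>open \<Omega>\<close> \<open>x \<in> \<Omega>\<close> open_contains_cball by blast
  define q where "q h = smul (of_real (1/h)) (E (x + h *\<^sub>R axis i 1) - E x)" for h
  have "l (q h) = of_real (1/h) * (Dl l \<beta> (x + h *\<^sub>R axis i 1) - Dl l \<beta> x)"
    if "l \<in> G" "\<bar>h\<bar> \<le> d" for l h
  proof -
    have "x + h *\<^sub>R axis i 1 \<in> \<Omega>"
      using that(2) \<open>cball x d \<subseteq> \<Omega>\<close> by (auto simp: dist_norm)
    then show ?thesis
      using rep[OF _ \<open>l \<in> G\<close>] \<open>x \<in> \<Omega>\<close> \<open>l \<in> G\<close> by (simp add: q_def dual_smul dual_diff)
  qed
  then have "\<exists>v. (\<forall>l\<in>G. l v = Dl l (\<beta>(i := Suc (\<beta> i))) x) \<and> (\<forall>a. ((\<lambda>h. P a (q h - v)) \<longlongrightarrow> 0) (at 0))"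
    using scalar_difference_quotient_hoelder[OF _ \<open>mi_order \<beta> < k\<close> \<open>d > 0\<close> \<open>cball x d \<subseteq> \<Omega>\<close>, of _ i]
    by (intro limit_at_0_if_weakly_hoelder[OF \<open>d > 0\<close> \<open>0 < \<gamma>\<close>]) simp
  then show ?thesis unfolding has_partial_def q_def by blast
qed

lemma weakly_represented:
  assumes "mi_order \<beta> \<le> k" "x \<in> \<Omega>"
  shows "\<exists>v. \<forall>l\<in>G. l v = Dl l \<beta> x"
  using assms
proof (induction "mi_order \<beta>" arbitrary: \<beta> x)
  case 0
  then have "\<beta> = (\<lambda>_. 0)" using mi_order_eq_0_iff by metis
  moreover have "l (f x) = Dl l (\<lambda>_. 0) x" if "l \<in> G" for l
    using scalar_derivs[OF that] \<open>x \<in> \<Omega>\<close> unfolding deriv_system_def by auto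
  ultimately show ?case by blast
next
  case (Suc n)
  obtain i \<beta>' where \<beta>': "mi_order \<beta>' = n" "\<beta> = \<beta>'(i := Suc (\<beta>' i))"
    using mi_order_eq_Suc_imp[OF Suc.hyps(2)[symmetric]] by blast
  have "\<forall>y\<in>\<Omega>. \<exists>v. \<forall>l\<in>G. l v = Dl l \<beta>' y"
    using Suc.hyps(1)[OF \<beta>'(1)[symmetric]] \<beta>'(1) Suc.hyps(2) Suc.prems(1) by simp
  then obtain E where E: "\<And>y l. y \<in> \<Omega> \<Longrightarrow> l \<in> G \<Longrightarrow> l (E y) = Dl l \<beta>' y" by metis
  have "mi_order \<beta>' < k" using \<beta>'(1) Suc.hyps(2) Suc.prems(1) by linarith
  from has_partial_if_weakly_represented[OF E this \<open>x \<in> \<Omega>\<close>, of i]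
  obtain v where "\<forall>l\<in>G. l v = Dl l (\<beta>'(i := Suc (\<beta>' i))) x" by blast
  then show ?case unfolding \<beta>'(2) by blast
qed

text \<open>Unique by \<open>eq_if_dual_eq\<close>; exists for \<open>mi_order \<beta> \<le> k\<close> by \<open>weakly_represented\<close>.\<close>

definition weak_derivative :: "('n \<Rightarrow> nat) \<Rightarrow> real^'n \<Rightarrow> 'e" where
  "weak_derivative \<beta> x = (SOME v. \<forall>l\<in>G. l v = Dl l \<beta> x)"

lemma dual_weak_derivative:
  "mi_order \<beta> \<le> k \<Longrightarrow> x \<in> \<Omega> \<Longrightarrow> l \<in> G \<Longrightarrow> l (weak_derivative \<beta> x) = Dl l \<beta> x"
  using someI_ex[OF weakly_represented[of \<beta> x]] unfolding weak_derivative_def by blast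

lemma hoelder_on_weak_derivative:
  assumes "mi_order \<beta> \<le> k" "compact K" "K \<subseteq> \<Omega>"
  shows "hoelder_on P \<gamma> K (weak_derivative \<beta>)"
proof (rule hoelder_on_if_weakly_hoelder_on)
  fix l assume "l \<in> G"
  have "hoelder_on (\<lambda>_::unit. norm) \<gamma> K (l \<circ> weak_derivative \<beta>) \<longleftrightarrow> hoelder_on (\<lambda>_::unit. norm) \<gamma> K (Dl l \<beta>)"
    using dual_weak_derivative[OF assms(1) _ \<open>l \<in> G\<close>] assms(3) by (intro hoelder_on_cong) auto
  then show "hoelder_on (\<lambda>_::unit. norm) \<gamma> K (l \<circ> weak_derivative \<beta>)"
    using scalar_hoelder[OF \<open>l \<in> G\<close> assms] by simp
qed

lemma deriv_system_weak_derivative: "deriv_system smul P \<Omega> k f weak_derivative"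
  unfolding deriv_system_def
proof (intro conjI allI impI ballI)
  fix x assume "x \<in> \<Omega>"
  show "weak_derivative (\<lambda>_. 0) x = f x"
  proof (rule eq_if_dual_eq)
    fix l assume "l \<in> G"
    then show "l (weak_derivative (\<lambda>_. 0) x) = l (f x)"
      using dual_weak_derivative[of "\<lambda>_. 0" x l] scalar_derivs[OF \<open>l \<in> G\<close>] \<open>x \<in> \<Omega>\<close>
      unfolding deriv_system_def by (simp add: mi_order_def)
  qed
next
  fix \<beta> :: "'n \<Rightarrow> nat" and i x assume "mi_order \<beta> < k" "x \<in> \<Omega>"
  have "l (weak_derivative \<beta> y) = Dl l \<beta> y" if "y \<in> \<Omega>" "l \<in> G" for y l
    using \<open>mi_order \<beta> < k\<close> that by (intro dual_weak_derivative) auto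
  from has_partial_if_weakly_represented[OF this \<open>mi_order \<beta> < k\<close> \<open>x \<in> \<Omega>\<close>]
  obtain v where v: "\<forall>l\<in>G. l v = Dl l (\<beta>(i := Suc (\<beta> i))) x" "has_partial smul P (weak_derivative \<beta>) i x v"
    by blast
  have "v = weak_derivative (\<beta>(i := Suc (\<beta> i))) x"
  proof (rule eq_if_dual_eq)
    fix l assume "l \<in> G"
    then show "l v = l (weak_derivative (\<beta>(i := Suc (\<beta> i))) x)"
      using v(1) dual_weak_derivative[OF _ \<open>x \<in> \<Omega>\<close> \<open>l \<in> G\<close>, of "\<beta>(i := Suc (\<beta> i))"] \<open>mi_order \<beta> < k\<close>
      by (simp add: mi_order_fun_upd_Suc)
  qed
  with v(2) show "has_partial smul P (weak_derivative \<beta>) i x (weak_derivative (\<beta>(i := Suc (\<beta> i))) x)"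
    by simp
next
  fix \<beta> :: "'n \<Rightarrow> nat" assume "mi_order \<beta> \<le> k"
  then show "lc_continuous_on P \<Omega> (weak_derivative \<beta>)"
    using hoelder_on_weak_derivative by (intro lc_continuous_on_if_hoelder_on[OF \<open>open \<Omega>\<close> \<open>0 < \<gamma>\<close>])
qed

lemma bounded_weak_derivative:
  assumes "mi_order \<beta> \<le> k" "compact K" "K \<subseteq> \<Omega>"
  shows "\<exists>C. \<forall>x\<in>K. P a (weak_derivative \<beta> x) \<le> C"
proof -
  have "lc_bounded P (weak_derivative \<beta> ` K)"
  proof (rule lc_bounded_if_weakly_bounded)
    fix l assume "l \<in> G"
    have "continuous_on K (Dl l \<beta>)"
      using deriv_system_norm_continuous_on[OF scalar_derivs[OF \<open>l \<in> G\<close>] assms(1)] assms(3)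
      by (rule continuous_on_subset)
    then have "bounded (Dl l \<beta> ` K)"
      using \<open>compact K\<close> by (intro compact_imp_bounded compact_continuous_image)
    then obtain C where C: "\<forall>z\<in>Dl l \<beta> ` K. norm z \<le> C" unfolding bounded_iff by blast
    have "norm (l (weak_derivative \<beta> x)) \<le> C" if "x \<in> K" for x
      using C dual_weak_derivative[OF assms(1) _ \<open>l \<in> G\<close>, of x] that assms(3) by auto
    then show "\<exists>C. \<forall>y\<in>weak_derivative \<beta> ` K. norm (l y) \<le> C" by blast
  qed
  then show ?thesis unfolding lc_bounded_def by blast
qed

lemma Ck_gamma_loc_if_weakly_hoelder_derivs: "Ck_gamma_loc smul P \<Omega> k \<gamma> f"
  using deriv_system_weak_derivative bounded_weak_derivative hoelder_on_weak_derivative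
  by (rule Ck_gamma_loc_if_bounded_hoelder) simp_all

end

lemma Ck_gamma_loc_if_weakly_Ck_gamma_loc:
  fixes \<Omega> :: "(real^'n::finite) set" and f :: "real^'n \<Rightarrow> 'e"
  assumes "open \<Omega>" "0 < \<gamma>" "\<gamma> \<le> 1" and weak: "\<forall>l\<in>G. Ck_gamma_loc_scalar \<Omega> k \<gamma> (l \<circ> f)"
  shows "Ck_gamma_loc smul P \<Omega> k \<gamma> f"
proof -
  have "\<exists>D. deriv_system (*) (\<lambda>_::unit. norm) \<Omega> k (l \<circ> f) D \<and>
      (\<forall>\<beta> K. mi_order \<beta> = k \<longrightarrow> compact K \<longrightarrow> K \<subseteq> \<Omega> \<longrightarrow> hoelder_on (\<lambda>_::unit. norm) \<gamma> K (D \<beta>))"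
    if "l \<in> G" for l
    using weak that by (elim Ck_gamma_loc_scalarE ballE) auto
  then obtain Dl where Dl: "\<And>l. l \<in> G \<Longrightarrow> deriv_system (*) (\<lambda>_::unit. norm) \<Omega> k (l \<circ> f) (Dl l)"
    and top: "\<And>l \<beta> K. l \<in> G \<Longrightarrow> mi_order \<beta> = k \<Longrightarrow> compact K \<Longrightarrow> K \<subseteq> \<Omega> \<Longrightarrow>
      hoelder_on (\<lambda>_::unit. norm) \<gamma> K (Dl l \<beta>)"
    by metis
  show ?thesis
  proof (rule Ck_gamma_loc_if_weakly_hoelder_derivs[OF \<open>open \<Omega>\<close> \<open>0 < \<gamma>\<close> Dl])
    fix l and \<beta> :: "'n \<Rightarrow> nat" and K assume "l \<in> G" "mi_order \<beta> \<le> k" "compact K" "K \<subseteq> \<Omega>"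
    then show "hoelder_on (\<lambda>_::unit. norm) \<gamma> K (Dl l \<beta>)"
      using top[of l \<beta> K] deriv_system_norm_hoelder_on[OF Dl \<open>open \<Omega>\<close> _ _ _ \<open>\<gamma> \<le> 1\<close>]
      by (cases "mi_order \<beta> = k") auto
  qed
qed

lemma Ck_gamma_loc_1_if_weakly_Ck_Suc:
  fixes \<Omega> :: "(real^'n::finite) set" and f :: "real^'n \<Rightarrow> 'e"
  assumes "open \<Omega>" and weak: "\<forall>l\<in>G. Ck_scalar \<Omega> (Suc k) (l \<circ> f)"
  shows "Ck_gamma_loc smul P \<Omega> k 1 f"
proof -
  obtain Dl where Dl: "\<And>l. l \<in> G \<Longrightarrow> deriv_system (*) (\<lambda>_::unit. norm) \<Omega> (Suc k) (l \<circ> f) (Dl l)"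
    using bchoice[OF weak[unfolded Ck_def]] by blast
  show ?thesis
  proof (rule Ck_gamma_loc_if_weakly_hoelder_derivs[OF \<open>open \<Omega>\<close>])
    show "deriv_system (*) (\<lambda>_::unit. norm) \<Omega> k (l \<circ> f) (Dl l)" if "l \<in> G" for l
      using Dl[OF that] by (rule deriv_system_Suc_imp)
    fix l and \<beta> :: "'n \<Rightarrow> nat" and K assume "l \<in> G" "mi_order \<beta> \<le> k" "compact K" "K \<subseteq> \<Omega>"
    then show "hoelder_on (\<lambda>_::unit. norm) 1 K (Dl l \<beta>)"
      by (intro deriv_system_norm_hoelder_on[OF Dl \<open>open \<Omega>\<close>]) auto
  qed simp
qed

end

theorem mainTheorem11:
  fixes smul :: "'k::real_normed_field \<Rightarrow> 'e::ab_group_add \<Rightarrow> 'e"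
    and P :: "'a \<Rightarrow> 'e \<Rightarrow> real"
    and G :: "('e \<Rightarrow> 'k) set"
    and \<Omega> :: "(real^'n::finite) set"
    and k :: nat and \<gamma> :: real
  assumes "lcHs smul P" and "locally_complete smul P"
    and "linear_subspace_fun G" and "G \<subseteq> lc_dual smul P" and "determines_boundedness P G"
    and "open \<Omega>" and "0 < \<gamma>" and "\<gamma> \<le> 1"
  shows "(\<forall>f :: real^'n \<Rightarrow> 'e. (\<forall>l\<in>G. Ck_gamma_loc_scalar \<Omega> k \<gamma> (l \<circ> f)) \<longrightarrow> Ck_gamma_loc smul P \<Omega> k \<gamma> f)
       \<and> (\<forall>f :: real^'n \<Rightarrow> 'e. (\<forall>l\<in>G. Ck_scalar \<Omega> (Suc k) (l \<circ> f)) \<longrightarrow> Ck_gamma_loc smul P \<Omega> k 1 f)"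
proof -
  interpret lcs_dual_complete smul P G
    using assms(1,2,4,5) by unfold_locales (simp_all add: lcs_def)
  show ?thesis
    using Ck_gamma_loc_if_weakly_Ck_gamma_loc[OF assms(6-8)]
      Ck_gamma_loc_1_if_weakly_Ck_Suc[OF assms(6)] by blast
qed

end
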